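(* Let $\mathscr V,\mathscr W$ be monoidal categories and $\mathscr C$ a $\mathscr V$-$\mathscr W$-bigraded category. (1) For every left $\mathscr V$-graded category $\mathscr A$, there is a right $\mathscr W$-graded category ${}^{\mathscr V}[\mathscr A,\mathscr C]_{\mathscr W}$ whose objects are the left $\mathscr V$-graded functors $\mathscr A\to{}_{\mathscr V}\mathscr C$, whose graded morphisms of grade $X'$ from $F$ to $G$ are the graded transformations $\phi\colon F\,'\,X'\Rightarrow G$, with composition and reindexing defined pointwise in $\mathscr C_{\mathscr W}$ (i.e. $(\psi\circ\phi)_A=\psi_A\circ\phi_A$ and $(\beta^*\phi)_A=\beta^*(\phi_A)$ in $\mathscr C_{\mathscr W}$) and identities $(\mathsf i_{FA})_A$. (2) Dually, for every right $\mathscr W$-graded category $\mathscr B$, there is a left $\mathscr V$-graded category ${}_{\mathscr V}[\mathscr B,\mathscr C]^{\mathscr W}$ whose objects are right $\mathscr W$-graded functors $\mathscr B\to\mathscr C_{\mathscr W}$, whose grade-$X$ morphisms $F\to G$ are families $\phi_B\in\mathscr C_{(X,I)}(FB,GB)$ ($B\in\mathrm{ob}\,\mathscr B$) such that for every $g\in\mathscr B_{X'}(B,B')$, $(\phi_B,\phi_{B'},Fg,Gg)$ is an $(X,X')$-bigraded square, with pointwise composition and reindexing in ${}_{\mathscr V}\mathscr C$.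
   Context: $\mathscr V,\mathscr W$ monoidal (structure $\otimes,I,a,\ell,r$); $\mathscr W^{\mathrm{rev}}$ has $X\otimes_{\mathrm{rev}}Y=Y\otimes X$. For a monoidal $\mathscr U$, a left $\mathscr U$-graded category has objects, sets $\mathscr C_X(A,B)$, reindexings $\alpha^*f\in\mathscr C_Y(A,B)$ along $\alpha\colon Y\to X$, composites $g\circ f\in\mathscr C_{Y\otimes X}(A,C)$, identities $\mathsf i_A\in\mathscr C_I(A,A)$, with functorial reindexing, $\beta^*g\circ\alpha^*f=(\beta\otimes\alpha)^*(g\circ f)$, $(h\circ g)\circ f=a^*(h\circ(g\circ f))$, $f\circ\mathsf i_A=r_X^*f$, $\mathsf i_B\circ f=\ell_X^*f$; graded functors preserve all this. A right $\mathscr W$-graded category is a left $\mathscr W^{\mathrm{rev}}$-graded one (composite of grades $X'$ then $Y'$ has grade $X'\otimes Y'$). A $\mathscr V$-$\mathscr W$-bigraded category $\mathscr C$ is a left $(\mathscr V\times\mathscr W^{\mathrm{rev}})$-graded category: sets $\mathscr C_{(X,X')}(A,B)$, $g\circ f\in\mathscr C_{(Y\otimes X,X'\otimes Y')}$. Its underlying left $\mathscr V$-graded ${}_{\mathscr V}\mathscr C$: $\mathscr C_{(X,I)}(A,B)$, reindexing $(\alpha,1_I)^*$, composition $(1,\ell_I^{-1})^*(g\circ f)$, identities $\mathsf i_A$; underlying right $\mathscr W$-graded $\mathscr C_{\mathscr W}$: $\mathscr C_{(I,X')}(A,B)$, reindexing $(1_I,\beta)^*$, composition $(\ell_I^{-1},1)^*(\psi\circ\varphi)$,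 identities $\mathsf i_A$. An $(X,X')$-bigraded square is $(f,g,\varphi,\varphi')$ with $f\in\mathscr C_{(X,I)}(A,A')$, $g\in\mathscr C_{(X,I)}(B,B')$, $\varphi\in\mathscr C_{(I,X')}(A,B)$, $\varphi'\in\mathscr C_{(I,X')}(A',B')$ and $(r_X^{-1},r_{X'}^{-1})^*(g\circ\varphi)=(\ell_X^{-1},\ell_{X'}^{-1})^*(\varphi'\circ f)$. For left $\mathscr V$-graded functors $F,G\colon\mathscr A\to{}_{\mathscr V}\mathscr C$ and $X'\in\mathscr W$, a graded transformation $\phi\colon F\,'\,X'\Rightarrow G$ is a family $\phi_A\in\mathscr C_{(I,X')}(FA,GA)$ such that $(Ff,Gf,\phi_A,\phi_B)$ is an $(X,X')$-bigraded square for every $f\in\mathscr A_X(A,B)$. *)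

theory Defs
  imports Main
begin

record ('o, 'm) mcat =
  mOb   :: "'o set"
  mAr   :: "'m set"
  mdom  :: "'m \<Rightarrow> 'o"
  mcod  :: "'m \<Rightarrow> 'o"
  mcomp :: "'m \<Rightarrow> 'm \<Rightarrow> 'm"   (* mcomp g f = g . f *)
  mid   :: "'o \<Rightarrow> 'm"
  mtO   :: "'o \<Rightarrow> 'o \<Rightarrow> 'o"
  mtM   :: "'m \<Rightarrow> 'm \<Rightarrow> 'm"
  munit :: "'o"
  masc  :: "'o \<Rightarrow> 'o \<Rightarrow> 'o \<Rightarrow> 'm"  (* a_{X,Y,Z} : (X*Y)*Z -> X*(Y*Z) *)
  mlu   :: "'o \<Rightarrow> 'm"   (* l_X : I*X -> X *)
  mru   :: "'o \<Rightarrow> 'm"   (* r_X : X*I -> X *)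

definition mhom :: "('o, 'm) mcat \<Rightarrow> 'o \<Rightarrow> 'o \<Rightarrow> 'm set" where
  "mhom M X Y = {f \<in> mAr M. mdom M f = X \<and> mcod M f = Y}"

definition category :: "('o, 'm) mcat \<Rightarrow> bool" where
  "category M \<longleftrightarrow>
    (\<forall>f\<in>mAr M. mdom M f \<in> mOb M \<and> mcod M f \<in> mOb M) \<and>
    (\<forall>X\<in>mOb M. mid M X \<in> mhom M X X) \<and>
    (\<forall>f\<in>mAr M. \<forall>g\<in>mAr M. mcod M f = mdom M g \<longrightarrow>
        mcomp M g f \<in> mhom M (mdom M f) (mcod M g)) \<and>
    (\<forall>f\<in>mAr M. \<forall>g\<in>mAr M. \<forall>h\<in>mAr M. mcod M f = mdom M g \<longrightarrow> mcod M g = mdom M h \<longrightarrow>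
        mcomp M h (mcomp M g f) = mcomp M (mcomp M h g) f) \<and>
    (\<forall>f\<in>mAr M. mcomp M f (mid M (mdom M f)) = f \<and> mcomp M (mid M (mcod M f)) f = f)"

definition miso :: "('o, 'm) mcat \<Rightarrow> 'm \<Rightarrow> bool" where
  "miso M f \<longleftrightarrow> f \<in> mAr M \<and>
    (\<exists>g\<in>mhom M (mcod M f) (mdom M f).
        mcomp M g f = mid M (mdom M f) \<and> mcomp M f g = mid M (mcod M f))"

definition minv :: "('o, 'm) mcat \<Rightarrow> 'm \<Rightarrow> 'm" where
  "minv M f = (SOME g. g \<in> mhom M (mcod M f) (mdom M f) \<and>
        mcomp M g f = mid M (mdom M f) \<and> mcomp M f g = mid M (mcod M f))"

definition monoidal_cat :: "('o, 'm) mcat \<Rightarrow> bool" where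
  "monoidal_cat M \<longleftrightarrow> category M \<and>
    munit M \<in> mOb M \<and>
    (\<forall>X\<in>mOb M. \<forall>Y\<in>mOb M. mtO M X Y \<in> mOb M) \<and>
    (\<forall>f\<in>mAr M. \<forall>g\<in>mAr M.
        mtM M f g \<in> mhom M (mtO M (mdom M f) (mdom M g)) (mtO M (mcod M f) (mcod M g))) \<and>
    (\<forall>X\<in>mOb M. \<forall>Y\<in>mOb M. mtM M (mid M X) (mid M Y) = mid M (mtO M X Y)) \<and>
    (\<forall>f\<in>mAr M. \<forall>g\<in>mAr M. \<forall>f'\<in>mAr M. \<forall>g'\<in>mAr M.
        mcod M f = mdom M g \<longrightarrow> mcod M f' = mdom M g' \<longrightarrow>
        mtM M (mcomp M g f) (mcomp M g' f') = mcomp M (mtM M g g') (mtM M f f')) \<and>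
    (\<forall>X\<in>mOb M. \<forall>Y\<in>mOb M. \<forall>Z\<in>mOb M.
        masc M X Y Z \<in> mhom M (mtO M (mtO M X Y) Z) (mtO M X (mtO M Y Z)) \<and>
        miso M (masc M X Y Z)) \<and>
    (\<forall>X\<in>mOb M. mlu M X \<in> mhom M (mtO M (munit M) X) X \<and> miso M (mlu M X)) \<and>
    (\<forall>X\<in>mOb M. mru M X \<in> mhom M (mtO M X (munit M)) X \<and> miso M (mru M X)) \<and>
    (\<forall>f\<in>mAr M. \<forall>g\<in>mAr M. \<forall>h\<in>mAr M.
        mcomp M (masc M (mcod M f) (mcod M g) (mcod M h)) (mtM M (mtM M f g) h)
      = mcomp M (mtM M f (mtM M g h)) (masc M (mdom M f) (mdom M g) (mdom M h))) \<and>
    (\<forall>f\<in>mAr M. mcomp M (mlu M (mcod M f)) (mtM M (mid M (munit M)) f)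
               = mcomp M f (mlu M (mdom M f))) \<and>
    (\<forall>f\<in>mAr M. mcomp M (mru M (mcod M f)) (mtM M f (mid M (munit M)))
               = mcomp M f (mru M (mdom M f))) \<and>
    (\<forall>W\<in>mOb M. \<forall>X\<in>mOb M. \<forall>Y\<in>mOb M. \<forall>Z\<in>mOb M.
        mcomp M (mtM M (mid M W) (masc M X Y Z))
          (mcomp M (masc M W (mtO M X Y) Z) (mtM M (masc M W X Y) (mid M Z)))
      = mcomp M (masc M W X (mtO M Y Z)) (masc M (mtO M W X) Y Z)) \<and>
    (\<forall>X\<in>mOb M. \<forall>Y\<in>mOb M.
        mcomp M (mtM M (mid M X) (mlu M Y)) (masc M X (munit M) Y)
      = mtM M (mru M X) (mid M Y))"

definition prodM :: "('o1, 'm1) mcat \<Rightarrow> ('o2, 'm2) mcat \<Rightarrow> ('o1 \<times> 'o2, 'm1 \<times> 'm2) mcat" where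
  "prodM M N = \<lparr>
     mOb = mOb M \<times> mOb N,
     mAr = mAr M \<times> mAr N,
     mdom = (\<lambda>(f, f'). (mdom M f, mdom N f')),
     mcod = (\<lambda>(f, f'). (mcod M f, mcod N f')),
     mcomp = (\<lambda>(g, g') (f, f'). (mcomp M g f, mcomp N g' f')),
     mid = (\<lambda>(X, X'). (mid M X, mid N X')),
     mtO = (\<lambda>(X, X') (Y, Y'). (mtO M X Y, mtO N X' Y')),
     mtM = (\<lambda>(f, f') (g, g'). (mtM M f g, mtM N f' g')),
     munit = (munit M, munit N),
     masc = (\<lambda>(X, X') (Y, Y') (Z, Z'). (masc M X Y Z, masc N X' Y' Z')),
     mlu = (\<lambda>(X, X'). (mlu M X, mlu N X')),
     mru = (\<lambda>(X, X'). (mru M X, mru N X')) \<rparr>"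

definition revM :: "('o, 'm) mcat \<Rightarrow> ('o, 'm) mcat" where
  "revM M = \<lparr>
     mOb = mOb M, mAr = mAr M, mdom = mdom M, mcod = mcod M,
     mcomp = mcomp M, mid = mid M,
     mtO = (\<lambda>X Y. mtO M Y X),
     mtM = (\<lambda>f g. mtM M g f),
     munit = munit M,
     masc = (\<lambda>X Y Z. minv M (masc M Z Y X)),
     mlu = mru M,
     mru = mlu M \<rparr>"

text \<open>Grades are objects of a monoidal category with object type 'o and arrow type 'm.
  gHom X A B = C_X(A,B); gre alpha A B f = alpha^* f (alpha : Y -> X, f in C_X(A,B));
  gcmp Y X A B C g f = g o f for f in C_X(A,B), g in C_Y(B,C); gid A = i_A.\<close>

record ('o, 'm, 'c, 'h) gcat =
  gOb  :: "'c set"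
  gHom :: "'o \<Rightarrow> 'c \<Rightarrow> 'c \<Rightarrow> 'h set"
  gre  :: "'m \<Rightarrow> 'c \<Rightarrow> 'c \<Rightarrow> 'h \<Rightarrow> 'h"
  gcmp :: "'o \<Rightarrow> 'o \<Rightarrow> 'c \<Rightarrow> 'c \<Rightarrow> 'c \<Rightarrow> 'h \<Rightarrow> 'h \<Rightarrow> 'h"
  gid  :: "'c \<Rightarrow> 'h"

definition graded_cat :: "('o, 'm) mcat \<Rightarrow> ('o, 'm, 'c, 'h) gcat \<Rightarrow> bool" where
  "graded_cat U C \<longleftrightarrow>
    (\<forall>\<alpha>\<in>mAr U. \<forall>A\<in>gOb C. \<forall>B\<in>gOb C. \<forall>f\<in>gHom C (mcod U \<alpha>) A B.
        gre C \<alpha> A B f \<in> gHom C (mdom U \<alpha>) A B) \<and>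
    (\<forall>X\<in>mOb U. \<forall>A\<in>gOb C. \<forall>B\<in>gOb C. \<forall>f\<in>gHom C X A B.
        gre C (mid U X) A B f = f) \<and>
    (\<forall>\<alpha>\<in>mAr U. \<forall>\<beta>\<in>mAr U. mcod U \<beta> = mdom U \<alpha> \<longrightarrow>
      (\<forall>A\<in>gOb C. \<forall>B\<in>gOb C. \<forall>f\<in>gHom C (mcod U \<alpha>) A B.
        gre C (mcomp U \<alpha> \<beta>) A B f = gre C \<beta> A B (gre C \<alpha> A B f))) \<and>
    (\<forall>X\<in>mOb U. \<forall>Y\<in>mOb U. \<forall>A\<in>gOb C. \<forall>B\<in>gOb C. \<forall>D\<in>gOb C.
      \<forall>f\<in>gHom C X A B. \<forall>g\<in>gHom C Y B D.
        gcmp C Y X A B D g f \<in> gHom C (mtO U Y X) A D) \<and>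
    (\<forall>A\<in>gOb C. gid C A \<in> gHom C (munit U) A A) \<and>
    (\<forall>\<alpha>\<in>mAr U. \<forall>\<beta>\<in>mAr U. \<forall>A\<in>gOb C. \<forall>B\<in>gOb C. \<forall>D\<in>gOb C.
      \<forall>f\<in>gHom C (mcod U \<alpha>) A B. \<forall>g\<in>gHom C (mcod U \<beta>) B D.
        gcmp C (mdom U \<beta>) (mdom U \<alpha>) A B D (gre C \<beta> B D g) (gre C \<alpha> A B f)
      = gre C (mtM U \<beta> \<alpha>) A D (gcmp C (mcod U \<beta>) (mcod U \<alpha>) A B D g f)) \<and>
    (\<forall>X\<in>mOb U. \<forall>Y\<in>mOb U. \<forall>Z\<in>mOb U. \<forall>A\<in>gOb C. \<forall>B\<in>gOb C. \<forall>D\<in>gOb C. \<forall>E\<in>gOb C.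
      \<forall>f\<in>gHom C X A B. \<forall>g\<in>gHom C Y B D. \<forall>h\<in>gHom C Z D E.
        gcmp C (mtO U Z Y) X A B E (gcmp C Z Y B D E h g) f
      = gre C (masc U Z Y X) A E (gcmp C Z (mtO U Y X) A D E h (gcmp C Y X A B D g f))) \<and>
    (\<forall>X\<in>mOb U. \<forall>A\<in>gOb C. \<forall>B\<in>gOb C. \<forall>f\<in>gHom C X A B.
        gcmp C X (munit U) A A B f (gid C A) = gre C (mru U X) A B f \<and>
        gcmp C (munit U) X A B B (gid C B) f = gre C (mlu U X) A B f)"

record ('o, 'a, 'c, 'h1, 'h2) gfun =
  fob  :: "'a \<Rightarrow> 'c"
  fmor :: "'o \<Rightarrow> 'a \<Rightarrow> 'a \<Rightarrow> 'h1 \<Rightarrow> 'h2"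

definition graded_functor ::
  "('o, 'm) mcat \<Rightarrow> ('o, 'm, 'a, 'h1) gcat \<Rightarrow> ('o, 'm, 'c, 'h2) gcat
     \<Rightarrow> ('o, 'a, 'c, 'h1, 'h2) gfun \<Rightarrow> bool" where
  "graded_functor U A B F \<longleftrightarrow>
    (\<forall>a\<in>gOb A. fob F a \<in> gOb B) \<and>
    (\<forall>X\<in>mOb U. \<forall>a\<in>gOb A. \<forall>b\<in>gOb A. \<forall>f\<in>gHom A X a b.
        fmor F X a b f \<in> gHom B X (fob F a) (fob F b)) \<and>
    (\<forall>\<alpha>\<in>mAr U. \<forall>a\<in>gOb A. \<forall>b\<in>gOb A. \<forall>f\<in>gHom A (mcod U \<alpha>) a b.
        fmor F (mdom U \<alpha>) a b (gre A \<alpha> a b f)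
      = gre B \<alpha> (fob F a) (fob F b) (fmor F (mcod U \<alpha>) a b f)) \<and>
    (\<forall>X\<in>mOb U. \<forall>Y\<in>mOb U. \<forall>a\<in>gOb A. \<forall>b\<in>gOb A. \<forall>c\<in>gOb A.
      \<forall>f\<in>gHom A X a b. \<forall>g\<in>gHom A Y b c.
        fmor F (mtO U Y X) a c (gcmp A Y X a b c g f)
      = gcmp B Y X (fob F a) (fob F b) (fob F c) (fmor F Y b c g) (fmor F X a b f)) \<and>
    (\<forall>a\<in>gOb A. fmor F (munit U) a a (gid A a) = gid B (fob F a))"

text \<open>A graded functor is determined by its action on objects and on graded morphisms;
  we represent it extensionally (undefined outside its domain).\<close>

definition gfun_ext :: "('o, 'm) mcat \<Rightarrow> ('o, 'm, 'a, 'h1) gcat \<Rightarrow> ('o, 'a, 'c, 'h1, 'h2) gfun \<Rightarrow> bool" where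
  "gfun_ext U A F \<longleftrightarrow>
    (\<forall>a. a \<notin> gOb A \<longrightarrow> fob F a = undefined) \<and>
    (\<forall>X a b f. \<not> (X \<in> mOb U \<and> a \<in> gOb A \<and> b \<in> gOb A \<and> f \<in> gHom A X a b)
        \<longrightarrow> fmor F X a b f = undefined)"

text \<open>A V-W-bigraded category is a left (V x W^rev)-graded category, i.e. a
  graded_cat (prodM V (revM W)).\<close>

definition underV :: "('v, 'vm) mcat \<Rightarrow> ('w, 'wm) mcat \<Rightarrow> ('v \<times> 'w, 'vm \<times> 'wm, 'c, 'h) gcat
    \<Rightarrow> ('v, 'vm, 'c, 'h) gcat" where
  "underV V W C = \<lparr>
     gOb = gOb C,
     gHom = (\<lambda>X. gHom C (X, munit W)),
     gre = (\<lambda>\<alpha>. gre C (\<alpha>, mid W (munit W))),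
     gcmp = (\<lambda>Y X A B D g f.
        gre C (mid V (mtO V Y X), minv W (mlu W (munit W))) A D
          (gcmp C (Y, munit W) (X, munit W) A B D g f)),
     gid = gid C \<rparr>"

definition underW :: "('v, 'vm) mcat \<Rightarrow> ('w, 'wm) mcat \<Rightarrow> ('v \<times> 'w, 'vm \<times> 'wm, 'c, 'h) gcat
    \<Rightarrow> ('w, 'wm, 'c, 'h) gcat" where
  "underW V W C = \<lparr>
     gOb = gOb C,
     gHom = (\<lambda>X'. gHom C (munit V, X')),
     gre = (\<lambda>\<beta>. gre C (mid V (munit V), \<beta>)),
     gcmp = (\<lambda>Y' X' A B D \<psi> \<phi>.
        gre C (minv V (mlu V (munit V)), mid W (mtO W X' Y')) A D
          (gcmp C (munit V, Y') (munit V, X') A B D \<psi> \<phi>)),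
     gid = gid C \<rparr>"

text \<open>(X,X')-bigraded square (f, g, phi, phi') with f : A -> A', g : B -> B',
  phi : A -> B, phi' : A' -> B'.\<close>

definition bsq :: "('v, 'vm) mcat \<Rightarrow> ('w, 'wm) mcat \<Rightarrow> ('v \<times> 'w, 'vm \<times> 'wm, 'c, 'h) gcat
    \<Rightarrow> 'v \<Rightarrow> 'w \<Rightarrow> 'c \<Rightarrow> 'c \<Rightarrow> 'c \<Rightarrow> 'c \<Rightarrow> 'h \<Rightarrow> 'h \<Rightarrow> 'h \<Rightarrow> 'h \<Rightarrow> bool" where
  "bsq V W C X X' A A' B B' f g \<phi> \<phi>' \<longleftrightarrow>
    f \<in> gHom C (X, munit W) A A' \<and>
    g \<in> gHom C (X, munit W) B B' \<and>
    \<phi> \<in> gHom C (munit V, X') A B \<and>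
    \<phi>' \<in> gHom C (munit V, X') A' B' \<and>
    gre C (minv V (mru V X), minv W (mru W X')) A B'
      (gcmp C (X, munit W) (munit V, X') A B B' g \<phi>)
  = gre C (minv V (mlu V X), minv W (mlu W X')) A B'
      (gcmp C (munit V, X') (X, munit W) A A' B' \<phi>' f)"

definition gtrans :: "('v, 'vm) mcat \<Rightarrow> ('w, 'wm) mcat \<Rightarrow> ('v, 'vm, 'a, 'ha) gcat
    \<Rightarrow> ('v \<times> 'w, 'vm \<times> 'wm, 'c, 'h) gcat
    \<Rightarrow> ('v, 'a, 'c, 'ha, 'h) gfun \<Rightarrow> ('v, 'a, 'c, 'ha, 'h) gfun \<Rightarrow> 'w \<Rightarrow> ('a \<Rightarrow> 'h) \<Rightarrow> bool" where
  "gtrans V W A C F G X' \<phi> \<longleftrightarrow>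
    (\<forall>a\<in>gOb A. \<phi> a \<in> gHom C (munit V, X') (fob F a) (fob G a)) \<and>
    (\<forall>X\<in>mOb V. \<forall>a\<in>gOb A. \<forall>b\<in>gOb A. \<forall>f\<in>gHom A X a b.
       bsq V W C X X' (fob F a) (fob F b) (fob G a) (fob G b)
         (fmor F X a b f) (fmor G X a b f) (\<phi> a) (\<phi> b))"

text \<open>Part (1): the right W-graded category  V[A, C]_W  (a left (revM W)-graded category).\<close>

definition funR :: "('v, 'vm) mcat \<Rightarrow> ('w, 'wm) mcat \<Rightarrow> ('v, 'vm, 'a, 'ha) gcat
    \<Rightarrow> ('v \<times> 'w, 'vm \<times> 'wm, 'c, 'h) gcat
    \<Rightarrow> ('w, 'wm, ('v, 'a, 'c, 'ha, 'h) gfun, 'a \<Rightarrow> 'h) gcat" where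
  "funR V W A C = \<lparr>
     gOb = {F. graded_functor V A (underV V W C) F \<and> gfun_ext V A F},
     gHom = (\<lambda>X' F G. {\<phi>. (\<forall>a. a \<notin> gOb A \<longrightarrow> \<phi> a = undefined) \<and> gtrans V W A C F G X' \<phi>}),
     gre = (\<lambda>\<beta> F G \<phi> a. if a \<in> gOb A
              then gre (underW V W C) \<beta> (fob F a) (fob G a) (\<phi> a) else undefined),
     gcmp = (\<lambda>Y' X' F G H \<psi> \<phi> a. if a \<in> gOb A
              then gcmp (underW V W C) Y' X' (fob F a) (fob G a) (fob H a) (\<psi> a) (\<phi> a)
              else undefined),
     gid = (\<lambda>F a. if a \<in> gOb A then gid C (fob F a) else undefined) \<rparr>"

definition funL :: "('v, 'vm) mcat \<Rightarrow> ('w, 'wm) mcat \<Rightarrow> ('w, 'wm, 'b, 'hb) gcat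
    \<Rightarrow> ('v \<times> 'w, 'vm \<times> 'wm, 'c, 'h) gcat
    \<Rightarrow> ('v, 'vm, ('w, 'b, 'c, 'hb, 'h) gfun, 'b \<Rightarrow> 'h) gcat" where
  "funL V W B C = \<lparr>
     gOb = {F. graded_functor (revM W) B (underW V W C) F \<and> gfun_ext (revM W) B F},
     gHom = (\<lambda>X F G. {\<phi>. (\<forall>b. b \<notin> gOb B \<longrightarrow> \<phi> b = undefined) \<and>
              (\<forall>b\<in>gOb B. \<phi> b \<in> gHom C (X, munit W) (fob F b) (fob G b)) \<and>
              (\<forall>X'\<in>mOb W. \<forall>b\<in>gOb B. \<forall>b'\<in>gOb B. \<forall>g\<in>gHom B X' b b'.
                 bsq V W C X X' (fob F b) (fob G b) (fob F b') (fob G b')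
                   (\<phi> b) (\<phi> b') (fmor F X' b b' g) (fmor G X' b b' g))}),
     gre = (\<lambda>\<alpha> F G \<phi> b. if b \<in> gOb B
              then gre (underV V W C) \<alpha> (fob F b) (fob G b) (\<phi> b) else undefined),
     gcmp = (\<lambda>Y X F G H \<psi> \<phi> b. if b \<in> gOb B
              then gcmp (underV V W C) Y X (fob F b) (fob G b) (fob H b) (\<psi> b) (\<phi> b)
              else undefined),
     gid = (\<lambda>F b. if b \<in> gOb B then gid C (fob F b) else undefined) \<rparr>"

end

theory Submission
  imports Defs
begin

(*
  Everything is pointwise. A graded transformation is a family of morphisms of the underlying
  right W-graded category of C, and the functor category operates componentwise with the
  operations of that underlying category. So the theorem reduces to two facts. First, the
  underlying one-sided categories of C are graded categories; the extra reindexing by l_I^-1 in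
  their composition is harmless because l_I = r_I and a_{I,I,I} is coherent with it. Second,
  bigraded squares are closed under pasting, reindexing and identities. A square commutes up to
  the unit swaps X (x) I = I (x) X; pasting two squares rearranges a triple composite one bracket
  or one square at a time, and the canonical isomorphisms accumulated on the two sides agree by
  Mac Lane coherence, which is reduced here to Kelly's identities.
*)

section \<open>Coherence in monoidal categories\<close>

locale monoidal_category =
  fixes M :: "('o, 'm) mcat"
  assumes monoidal: "monoidal_cat M"
begin

abbreviation comp (infixr "\<cdot>" 55) where "g \<cdot> f \<equiv> mcomp M g f"
abbreviation tensor (infixr "\<star>" 60) where "f \<star> g \<equiv> mtM M f g"
abbreviation tensor_ob (infixr "\<odot>" 60) where "X \<odot> Y \<equiv> mtO M X Y"

lemma category: "category M"
  using monoidal unfolding monoidal_cat_def by blast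

lemma dom_in_ob [simp]: "f \<in> mAr M \<Longrightarrow> mdom M f \<in> mOb M"
  and cod_in_ob [simp]: "f \<in> mAr M \<Longrightarrow> mcod M f \<in> mOb M"
  and id_in_ar [simp]: "X \<in> mOb M \<Longrightarrow> mid M X \<in> mAr M"
  and dom_id [simp]: "X \<in> mOb M \<Longrightarrow> mdom M (mid M X) = X"
  and cod_id [simp]: "X \<in> mOb M \<Longrightarrow> mcod M (mid M X) = X"
  and comp_in_ar [simp]: "f \<in> mAr M \<Longrightarrow> g \<in> mAr M \<Longrightarrow> mcod M f = mdom M g \<Longrightarrow> g \<cdot> f \<in> mAr M"
  and dom_comp [simp]: "f \<in> mAr M \<Longrightarrow> g \<in> mAr M \<Longrightarrow> mcod M f = mdom M g \<Longrightarrow> mdom M (g \<cdot> f) = mdom M f"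
  and cod_comp [simp]: "f \<in> mAr M \<Longrightarrow> g \<in> mAr M \<Longrightarrow> mcod M f = mdom M g \<Longrightarrow> mcod M (g \<cdot> f) = mcod M g"
  and comp_id_right [simp]: "f \<in> mAr M \<Longrightarrow> mdom M f = X \<Longrightarrow> f \<cdot> mid M X = f"
  and comp_id_left [simp]: "f \<in> mAr M \<Longrightarrow> mcod M f = X \<Longrightarrow> mid M X \<cdot> f = f"
  using category unfolding category_def mhom_def by blast+

lemma comp_assoc:
  "f \<in> mAr M \<Longrightarrow> g \<in> mAr M \<Longrightarrow> h \<in> mAr M \<Longrightarrow> mcod M f = mdom M g \<Longrightarrow> mcod M g = mdom M h \<Longrightarrow>
   (h \<cdot> g) \<cdot> f = h \<cdot> (g \<cdot> f)"
  using category unfolding category_def by metis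

lemma unit_in_ob [simp]: "munit M \<in> mOb M"
  and tensor_ob_in_ob [simp]: "X \<in> mOb M \<Longrightarrow> Y \<in> mOb M \<Longrightarrow> X \<odot> Y \<in> mOb M"
  and tensor_in_ar [simp]: "f \<in> mAr M \<Longrightarrow> g \<in> mAr M \<Longrightarrow> f \<star> g \<in> mAr M"
  and dom_tensor [simp]: "f \<in> mAr M \<Longrightarrow> g \<in> mAr M \<Longrightarrow> mdom M (f \<star> g) = mdom M f \<odot> mdom M g"
  and cod_tensor [simp]: "f \<in> mAr M \<Longrightarrow> g \<in> mAr M \<Longrightarrow> mcod M (f \<star> g) = mcod M f \<odot> mcod M g"
  and tensor_id [simp]: "X \<in> mOb M \<Longrightarrow> Y \<in> mOb M \<Longrightarrow> mid M X \<star> mid M Y = mid M (X \<odot> Y)"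
  and assoc_in_ar [simp]: "X \<in> mOb M \<Longrightarrow> Y \<in> mOb M \<Longrightarrow> Z \<in> mOb M \<Longrightarrow> masc M X Y Z \<in> mAr M"
  and dom_assoc [simp]: "X \<in> mOb M \<Longrightarrow> Y \<in> mOb M \<Longrightarrow> Z \<in> mOb M \<Longrightarrow> mdom M (masc M X Y Z) = (X \<odot> Y) \<odot> Z"
  and cod_assoc [simp]: "X \<in> mOb M \<Longrightarrow> Y \<in> mOb M \<Longrightarrow> Z \<in> mOb M \<Longrightarrow> mcod M (masc M X Y Z) = X \<odot> (Y \<odot> Z)"
  and iso_assoc [simp]: "X \<in> mOb M \<Longrightarrow> Y \<in> mOb M \<Longrightarrow> Z \<in> mOb M \<Longrightarrow> miso M (masc M X Y Z)"
  and lunit_in_ar [simp]: "X \<in> mOb M \<Longrightarrow> mlu M X \<in> mAr M"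
  and dom_lunit [simp]: "X \<in> mOb M \<Longrightarrow> mdom M (mlu M X) = munit M \<odot> X"
  and cod_lunit [simp]: "X \<in> mOb M \<Longrightarrow> mcod M (mlu M X) = X"
  and iso_lunit [simp]: "X \<in> mOb M \<Longrightarrow> miso M (mlu M X)"
  and runit_in_ar [simp]: "X \<in> mOb M \<Longrightarrow> mru M X \<in> mAr M"
  and dom_runit [simp]: "X \<in> mOb M \<Longrightarrow> mdom M (mru M X) = X \<odot> munit M"
  and cod_runit [simp]: "X \<in> mOb M \<Longrightarrow> mcod M (mru M X) = X"
  and iso_runit [simp]: "X \<in> mOb M \<Longrightarrow> miso M (mru M X)"
  using monoidal unfolding monoidal_cat_def mhom_def by - (elim conjE, blast)+

lemma interchange:
  "f \<in> mAr M \<Longrightarrow> g \<in> mAr M \<Longrightarrow> f' \<in> mAr M \<Longrightarrow> g' \<in> mAr M \<Longrightarrow>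
   mcod M f = mdom M g \<Longrightarrow> mcod M f' = mdom M g' \<Longrightarrow> (g \<cdot> f) \<star> (g' \<cdot> f') = (g \<star> g') \<cdot> (f \<star> f')"
  using monoidal unfolding monoidal_cat_def by blast

lemma assoc_naturality:
  "f \<in> mAr M \<Longrightarrow> g \<in> mAr M \<Longrightarrow> h \<in> mAr M \<Longrightarrow>
   masc M (mcod M f) (mcod M g) (mcod M h) \<cdot> ((f \<star> g) \<star> h)
     = (f \<star> (g \<star> h)) \<cdot> masc M (mdom M f) (mdom M g) (mdom M h)"
  and lunit_naturality:
  "f \<in> mAr M \<Longrightarrow> mlu M (mcod M f) \<cdot> (mid M (munit M) \<star> f) = f \<cdot> mlu M (mdom M f)"
  and runit_naturality:
  "f \<in> mAr M \<Longrightarrow> mru M (mcod M f) \<cdot> (f \<star> mid M (munit M)) = f \<cdot> mru M (mdom M f)"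
  using monoidal unfolding monoidal_cat_def by blast+

lemma pentagon:
  "W \<in> mOb M \<Longrightarrow> X \<in> mOb M \<Longrightarrow> Y \<in> mOb M \<Longrightarrow> Z \<in> mOb M \<Longrightarrow>
   (mid M W \<star> masc M X Y Z) \<cdot> (masc M W (X \<odot> Y) Z \<cdot> (masc M W X Y \<star> mid M Z))
     = masc M W X (Y \<odot> Z) \<cdot> masc M (W \<odot> X) Y Z"
  and triangle:
  "X \<in> mOb M \<Longrightarrow> Y \<in> mOb M \<Longrightarrow>
   (mid M X \<star> mlu M Y) \<cdot> masc M X (munit M) Y = mru M X \<star> mid M Y"
  using monoidal unfolding monoidal_cat_def by blast+

lemma minv_is_inverse:
  assumes "miso M f"
  shows "minv M f \<in> mAr M \<and> mdom M (minv M f) = mcod M f \<and> mcod M (minv M f) = mdom M f \<and>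
         minv M f \<cdot> f = mid M (mdom M f) \<and> f \<cdot> minv M f = mid M (mcod M f)"
proof -
  have "\<exists>g. g \<in> mhom M (mcod M f) (mdom M f) \<and> g \<cdot> f = mid M (mdom M f) \<and> f \<cdot> g = mid M (mcod M f)"
    using assms unfolding miso_def by blast
  from someI_ex[OF this] show ?thesis unfolding minv_def mhom_def by blast
qed

lemma iso_in_ar: "miso M f \<Longrightarrow> f \<in> mAr M"
  unfolding miso_def by blast

lemma inv_in_ar [simp]: "miso M f \<Longrightarrow> minv M f \<in> mAr M"
  and dom_inv [simp]: "miso M f \<Longrightarrow> mdom M (minv M f) = mcod M f"
  and cod_inv [simp]: "miso M f \<Longrightarrow> mcod M (minv M f) = mdom M f"
  and comp_inv_left [simp]: "miso M f \<Longrightarrow> minv M f \<cdot> f = mid M (mdom M f)"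
  and comp_inv_right [simp]: "miso M f \<Longrightarrow> f \<cdot> minv M f = mid M (mcod M f)"
  using minv_is_inverse by blast+

lemma inv_unique:
  assumes f: "miso M f" and g: "g \<in> mAr M" "mdom M g = mcod M f" "mcod M g = mdom M f"
    and left_inverse: "g \<cdot> f = mid M (mdom M f)"
  shows "minv M f = g"
proof -
  have f_ar: "f \<in> mAr M" using f iso_in_ar by blast
  have "g = g \<cdot> (f \<cdot> minv M f)" using f g f_ar by simp
  also have "\<dots> = (g \<cdot> f) \<cdot> minv M f" using f g f_ar by (simp add: comp_assoc)
  also have "\<dots> = minv M f" using left_inverse f f_ar by simp
  finally show ?thesis by simp
qed

lemma isoI:
  "f \<in> mAr M \<Longrightarrow> g \<in> mAr M \<Longrightarrow> mdom M g = mcod M f \<Longrightarrow> mcod M g = mdom M f \<Longrightarrow>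
   g \<cdot> f = mid M (mdom M f) \<Longrightarrow> f \<cdot> g = mid M (mcod M f) \<Longrightarrow> miso M f"
  unfolding miso_def mhom_def by blast

lemma iso_inv [simp]: "miso M f \<Longrightarrow> miso M (minv M f)"
  by (rule isoI[where g = f]) (auto simp: iso_in_ar)

lemma inv_inv [simp]: "miso M f \<Longrightarrow> minv M (minv M f) = f"
  by (rule inv_unique) (auto simp: iso_in_ar)

lemma iso_comp [simp]:
  assumes "miso M f" "miso M g" "mcod M f = mdom M g"
  shows "miso M (g \<cdot> f)"
  using assms iso_in_ar[OF assms(1)] iso_in_ar[OF assms(2)]
  by (intro isoI[where g = "minv M f \<cdot> minv M g"])
    (auto simp: comp_assoc[symmetric], simp_all add: comp_assoc)

lemma inv_comp:
  assumes "miso M f" "miso M g" "mcod M f = mdom M g"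
  shows "minv M (g \<cdot> f) = minv M f \<cdot> minv M g"
  using assms iso_in_ar[OF assms(1)] iso_in_ar[OF assms(2)]
  by (intro inv_unique) (auto simp: comp_assoc[symmetric], simp_all add: comp_assoc)

lemma iso_tensor [simp]:
  assumes "miso M f" "miso M g"
  shows "miso M (f \<star> g)"
  using assms iso_in_ar[OF assms(1)] iso_in_ar[OF assms(2)]
  by (intro isoI[where g = "minv M f \<star> minv M g"]) (auto simp: interchange[symmetric])

lemma inv_tensor:
  assumes "miso M f" "miso M g"
  shows "minv M (f \<star> g) = minv M f \<star> minv M g"
  using assms iso_in_ar[OF assms(1)] iso_in_ar[OF assms(2)]
  by (intro inv_unique) (auto simp: interchange[symmetric])

lemma iso_id [simp]: "X \<in> mOb M \<Longrightarrow> miso M (mid M X)"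
  by (rule isoI[where g = "mid M X"]) auto

lemma inv_id [simp]: "X \<in> mOb M \<Longrightarrow> minv M (mid M X) = mid M X"
  by (rule inv_unique) auto

lemma iso_cancel_right:
  assumes f: "miso M f" and g: "g \<in> mAr M" "mdom M g = mcod M f" and h: "h \<in> mAr M" "mdom M h = mcod M f"
    and eq: "g \<cdot> f = h \<cdot> f"
  shows "g = h"
proof -
  have f_ar: "f \<in> mAr M" using f iso_in_ar by blast
  have "g = (g \<cdot> f) \<cdot> minv M f" using f g f_ar by (simp add: comp_assoc)
  also have "\<dots> = (h \<cdot> f) \<cdot> minv M f" using eq by simp
  also have "\<dots> = h" using f h f_ar by (simp add: comp_assoc)
  finally show ?thesis .
qed

lemma iso_cancel_left:
  assumes f: "miso M f" and g: "g \<in> mAr M" "mcod M g = mdom M f" and h: "h \<in> mAr M" "mcod M h = mdom M f"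
    and eq: "f \<cdot> g = f \<cdot> h"
  shows "g = h"
proof -
  have f_ar: "f \<in> mAr M" using f iso_in_ar by blast
  have "g = minv M f \<cdot> (f \<cdot> g)" using f g f_ar by (simp add: comp_assoc[symmetric])
  also have "\<dots> = minv M f \<cdot> (f \<cdot> h)" using eq by simp
  also have "\<dots> = h" using f h f_ar by (simp add: comp_assoc[symmetric])
  finally show ?thesis .
qed

lemma inv_naturality:
  assumes u: "miso M u" and v: "miso M v"
    and x: "x \<in> mAr M" "mdom M x = mdom M u" "mcod M x = mdom M v"
    and y: "y \<in> mAr M" "mdom M y = mcod M u" "mcod M y = mcod M v"
    and natural: "v \<cdot> x = y \<cdot> u"
  shows "x \<cdot> minv M u = minv M v \<cdot> y"
proof -
  have uv_ar: "u \<in> mAr M" "v \<in> mAr M" using u v iso_in_ar by auto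
  have "minv M v \<cdot> y = minv M v \<cdot> ((y \<cdot> u) \<cdot> minv M u)" using u v x y uv_ar by (simp add: comp_assoc)
  also have "\<dots> = minv M v \<cdot> ((v \<cdot> x) \<cdot> minv M u)" using natural by simp
  also have "\<dots> = x \<cdot> minv M u" using u v x y uv_ar by (simp add: comp_assoc[symmetric])
  finally show ?thesis by simp
qed

lemma id_tensor_comp:
  "X \<in> mOb M \<Longrightarrow> f \<in> mAr M \<Longrightarrow> g \<in> mAr M \<Longrightarrow> mcod M f = mdom M g \<Longrightarrow>
   mid M X \<star> (g \<cdot> f) = (mid M X \<star> g) \<cdot> (mid M X \<star> f)"
  using interchange[of "mid M X" "mid M X" f g] by simp

lemma comp_tensor_id:
  "X \<in> mOb M \<Longrightarrow> f \<in> mAr M \<Longrightarrow> g \<in> mAr M \<Longrightarrow> mcod M f = mdom M g \<Longrightarrow>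
   (g \<cdot> f) \<star> mid M X = (g \<star> mid M X) \<cdot> (f \<star> mid M X)"
  using interchange[of f g "mid M X" "mid M X"] by simp

lemma tensor_unit_faithful_left:
  assumes "f \<in> mAr M" "g \<in> mAr M" "mdom M f = mdom M g" "mcod M f = mcod M g"
    and "mid M (munit M) \<star> f = mid M (munit M) \<star> g"
  shows "f = g"
proof (rule iso_cancel_right[of "mlu M (mdom M f)"])
  show "f \<cdot> mlu M (mdom M f) = g \<cdot> mlu M (mdom M f)"
    using lunit_naturality[of f] lunit_naturality[of g] assms by simp
qed (use assms in auto)

lemma tensor_unit_faithful_right:
  assumes "f \<in> mAr M" "g \<in> mAr M" "mdom M f = mdom M g" "mcod M f = mcod M g"
    and "f \<star> mid M (munit M) = g \<star> mid M (munit M)"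
  shows "f = g"
proof (rule iso_cancel_right[of "mru M (mdom M f)"])
  show "f \<cdot> mru M (mdom M f) = g \<cdot> mru M (mdom M f)"
    using runit_naturality[of f] runit_naturality[of g] assms by simp
qed (use assms in auto)

(* Kelly: whiskering by I is faithful, and the whiskered sides agree by the pentagon and triangle. *)
lemma lunit_tensor:
  assumes X: "X \<in> mOb M" and Y: "Y \<in> mOb M"
  shows "mlu M (X \<odot> Y) \<cdot> masc M (munit M) X Y = mlu M X \<star> mid M Y"
proof (rule tensor_unit_faithful_left)
  let ?I = "munit M"
  let ?k = "masc M ?I (?I \<odot> X) Y \<cdot> (masc M ?I ?I X \<star> mid M Y)"
  have "(mid M ?I \<star> (mlu M (X \<odot> Y) \<cdot> masc M ?I X Y)) \<cdot> ?k
      = (mid M ?I \<star> mlu M (X \<odot> Y)) \<cdot> ((mid M ?I \<star> masc M ?I X Y) \<cdot> ?k)"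
    using X Y by (simp add: id_tensor_comp comp_assoc)
  also have "\<dots> = (mid M ?I \<star> mlu M (X \<odot> Y)) \<cdot> (masc M ?I ?I (X \<odot> Y) \<cdot> masc M (?I \<odot> ?I) X Y)"
    using pentagon[of ?I ?I X Y] X Y by simp
  also have "\<dots> = (mru M ?I \<star> mid M (X \<odot> Y)) \<cdot> masc M (?I \<odot> ?I) X Y"
    using triangle[of ?I "X \<odot> Y"] X Y by (simp add: comp_assoc[symmetric])
  also have "\<dots> = masc M ?I X Y \<cdot> ((mru M ?I \<star> mid M X) \<star> mid M Y)"
    using assoc_naturality[of "mru M ?I" "mid M X" "mid M Y"] X Y by simp
  finally have lhs: "(mid M ?I \<star> (mlu M (X \<odot> Y) \<cdot> masc M ?I X Y)) \<cdot> ?k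
    = masc M ?I X Y \<cdot> ((mru M ?I \<star> mid M X) \<star> mid M Y)" .
  have "(mid M ?I \<star> (mlu M X \<star> mid M Y)) \<cdot> ?k
      = ((mid M ?I \<star> (mlu M X \<star> mid M Y)) \<cdot> masc M ?I (?I \<odot> X) Y) \<cdot> (masc M ?I ?I X \<star> mid M Y)"
    using X Y by (simp add: comp_assoc)
  also have "\<dots> = (masc M ?I X Y \<cdot> ((mid M ?I \<star> mlu M X) \<star> mid M Y)) \<cdot> (masc M ?I ?I X \<star> mid M Y)"
    using assoc_naturality[of "mid M ?I" "mlu M X" "mid M Y"] X Y by simp
  also have "\<dots> = masc M ?I X Y \<cdot> (((mid M ?I \<star> mlu M X) \<cdot> masc M ?I ?I X) \<star> mid M Y)"
    using X Y by (simp add: comp_assoc comp_tensor_id)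
  also have "\<dots> = masc M ?I X Y \<cdot> ((mru M ?I \<star> mid M X) \<star> mid M Y)"
    using triangle[of ?I X] X Y by simp
  finally have rhs: "(mid M ?I \<star> (mlu M X \<star> mid M Y)) \<cdot> ?k
    = masc M ?I X Y \<cdot> ((mru M ?I \<star> mid M X) \<star> mid M Y)" .
  show "mid M ?I \<star> (mlu M (X \<odot> Y) \<cdot> masc M ?I X Y) = mid M ?I \<star> (mlu M X \<star> mid M Y)"
    by (rule iso_cancel_right[of ?k]) (use X Y lhs rhs in simp_all)
qed (use X Y in simp_all)

lemma runit_tensor:
  assumes X: "X \<in> mOb M" and Y: "Y \<in> mOb M"
  shows "(mid M X \<star> mru M Y) \<cdot> masc M X Y (munit M) = mru M (X \<odot> Y)"
proof (rule tensor_unit_faithful_right)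
  let ?I = "munit M"
  let ?k = "masc M X Y (?I \<odot> ?I) \<cdot> masc M (X \<odot> Y) ?I ?I"
  have "(mid M X \<star> (mid M Y \<star> mlu M ?I)) \<cdot> ?k
      = ((mid M X \<star> (mid M Y \<star> mlu M ?I)) \<cdot> masc M X Y (?I \<odot> ?I)) \<cdot> masc M (X \<odot> Y) ?I ?I"
    using X Y by (simp add: comp_assoc)
  also have "\<dots> = (masc M X Y ?I \<cdot> ((mid M X \<star> mid M Y) \<star> mlu M ?I)) \<cdot> masc M (X \<odot> Y) ?I ?I"
    using assoc_naturality[of "mid M X" "mid M Y" "mlu M ?I"] X Y by simp
  also have "\<dots> = masc M X Y ?I \<cdot> ((mid M (X \<odot> Y) \<star> mlu M ?I) \<cdot> masc M (X \<odot> Y) ?I ?I)"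
    using X Y by (simp add: comp_assoc)
  also have "\<dots> = masc M X Y ?I \<cdot> (mru M (X \<odot> Y) \<star> mid M ?I)"
    using triangle[of "X \<odot> Y" ?I] X Y by simp
  finally have lhs: "(mid M X \<star> (mid M Y \<star> mlu M ?I)) \<cdot> ?k = masc M X Y ?I \<cdot> (mru M (X \<odot> Y) \<star> mid M ?I)" .
  have "(mid M X \<star> (mid M Y \<star> mlu M ?I)) \<cdot> ?k
      = (mid M X \<star> (mid M Y \<star> mlu M ?I)) \<cdot>
          ((mid M X \<star> masc M Y ?I ?I) \<cdot> (masc M X (Y \<odot> ?I) ?I \<cdot> (masc M X Y ?I \<star> mid M ?I)))"
    using pentagon[of X Y ?I ?I] X Y by simp
  also have "\<dots> = ((mid M X \<star> ((mid M Y \<star> mlu M ?I) \<cdot> masc M Y ?I ?I)) \<cdot> masc M X (Y \<odot> ?I) ?I)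
      \<cdot> (masc M X Y ?I \<star> mid M ?I)"
    using X Y by (simp add: comp_assoc id_tensor_comp)
  also have "\<dots> = ((mid M X \<star> (mru M Y \<star> mid M ?I)) \<cdot> masc M X (Y \<odot> ?I) ?I) \<cdot> (masc M X Y ?I \<star> mid M ?I)"
    using triangle[of Y ?I] X Y by simp
  also have "\<dots> = (masc M X Y ?I \<cdot> ((mid M X \<star> mru M Y) \<star> mid M ?I)) \<cdot> (masc M X Y ?I \<star> mid M ?I)"
    using assoc_naturality[of "mid M X" "mru M Y" "mid M ?I"] X Y by simp
  also have "\<dots> = masc M X Y ?I \<cdot> (((mid M X \<star> mru M Y) \<cdot> masc M X Y ?I) \<star> mid M ?I)"
    using X Y by (simp add: comp_assoc comp_tensor_id)
  finally have rhs: "(mid M X \<star> (mid M Y \<star> mlu M ?I)) \<cdot> ?k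
    = masc M X Y ?I \<cdot> (((mid M X \<star> mru M Y) \<cdot> masc M X Y ?I) \<star> mid M ?I)" .
  show "((mid M X \<star> mru M Y) \<cdot> masc M X Y ?I) \<star> mid M ?I = mru M (X \<odot> Y) \<star> mid M ?I"
    by (rule iso_cancel_left[of "masc M X Y ?I"]) (use X Y lhs rhs in simp_all)
qed (use X Y in simp_all)

lemma lunit_unit_eq_runit_unit: "mlu M (munit M) = mru M (munit M)"
proof (rule tensor_unit_faithful_right)
  let ?I = "munit M"
  have "mlu M (?I \<odot> ?I) = mid M ?I \<star> mlu M ?I"
  proof (rule iso_cancel_left[of "mlu M ?I"])
    show "mlu M ?I \<cdot> mlu M (?I \<odot> ?I) = mlu M ?I \<cdot> (mid M ?I \<star> mlu M ?I)"
      using lunit_naturality[of "mlu M ?I"] by simp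
  qed simp_all
  then show "mlu M ?I \<star> mid M ?I = mru M ?I \<star> mid M ?I"
    using lunit_tensor[of ?I ?I] triangle[of ?I ?I] by simp
qed simp_all

lemma lunit_inv_naturality:
  "f \<in> mAr M \<Longrightarrow> (mid M (munit M) \<star> f) \<cdot> minv M (mlu M (mdom M f)) = minv M (mlu M (mcod M f)) \<cdot> f"
  by (rule inv_naturality) (simp_all add: lunit_naturality)

lemma runit_inv_naturality:
  "f \<in> mAr M \<Longrightarrow> (f \<star> mid M (munit M)) \<cdot> minv M (mru M (mdom M f)) = minv M (mru M (mcod M f)) \<cdot> f"
  by (rule inv_naturality) (simp_all add: runit_naturality)

lemma lunit_tensor_inv:
  "X \<in> mOb M \<Longrightarrow> Y \<in> mOb M \<Longrightarrow>
   minv M (masc M (munit M) X Y) \<cdot> minv M (mlu M (X \<odot> Y)) = minv M (mlu M X) \<star> mid M Y"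
  using arg_cong[OF lunit_tensor, of X Y "minv M"] by (simp add: inv_comp inv_tensor)

lemma assoc_lunit_inv_tensor:
  assumes X: "X \<in> mOb M" and Y: "Y \<in> mOb M"
  shows "masc M (munit M) X Y \<cdot> (minv M (mlu M X) \<star> mid M Y) = minv M (mlu M (X \<odot> Y))"
proof -
  have "masc M (munit M) X Y \<cdot> (minv M (mlu M X) \<star> mid M Y)
      = masc M (munit M) X Y \<cdot> (minv M (masc M (munit M) X Y) \<cdot> minv M (mlu M (X \<odot> Y)))"
    using lunit_tensor_inv[OF X Y] by simp
  also have "\<dots> = minv M (mlu M (X \<odot> Y))" using X Y by (simp add: comp_assoc[symmetric])
  finally show ?thesis .
qed

lemma assoc_runit_inv_tensor:
  assumes X: "X \<in> mOb M" and Y: "Y \<in> mOb M"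
  shows "masc M X Y (munit M) \<cdot> minv M (mru M (X \<odot> Y)) = mid M X \<star> minv M (mru M Y)"
proof -
  have inv: "minv M (masc M X Y (munit M)) \<cdot> (mid M X \<star> minv M (mru M Y)) = minv M (mru M (X \<odot> Y))"
    using arg_cong[OF runit_tensor[OF X Y], of "minv M"] X Y by (simp add: inv_comp inv_tensor)
  have "masc M X Y (munit M) \<cdot> minv M (mru M (X \<odot> Y))
      = masc M X Y (munit M) \<cdot> (minv M (masc M X Y (munit M)) \<cdot> (mid M X \<star> minv M (mru M Y)))"
    using inv by simp
  also have "\<dots> = mid M X \<star> minv M (mru M Y)" using X Y by (simp add: comp_assoc[symmetric])
  finally show ?thesis .
qed

lemma triangle_inv:
  "X \<in> mOb M \<Longrightarrow> Y \<in> mOb M \<Longrightarrow>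
   minv M (masc M X (munit M) Y) \<cdot> (mid M X \<star> minv M (mlu M Y)) = minv M (mru M X) \<star> mid M Y"
  using arg_cong[OF triangle, of X Y "minv M"] by (simp add: inv_comp inv_tensor)

(* The two composites of a bigraded square differ by reindexing along the unit swaps. *)
definition unit_swap :: "'o \<Rightarrow> 'm" where
  "unit_swap X = minv M (mlu M X) \<cdot> mru M X"

lemma unit_swap_in_ar [simp]: "X \<in> mOb M \<Longrightarrow> unit_swap X \<in> mAr M"
  and dom_unit_swap [simp]: "X \<in> mOb M \<Longrightarrow> mdom M (unit_swap X) = X \<odot> munit M"
  and cod_unit_swap [simp]: "X \<in> mOb M \<Longrightarrow> mcod M (unit_swap X) = munit M \<odot> X"
  unfolding unit_swap_def by simp_all

lemma unit_swap_runit_inv: "X \<in> mOb M \<Longrightarrow> unit_swap X \<cdot> minv M (mru M X) = minv M (mlu M X)"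
  unfolding unit_swap_def by (simp add: comp_assoc)

(* Both sides of the next two identities are canonical isomorphisms with the same source and
   target; these are the cases met when two squares are pasted. *)
lemma unit_swap_tensor:
  assumes X: "X \<in> mOb M" and Y: "Y \<in> mOb M"
  shows "masc M (munit M) X Y \<cdot> ((unit_swap X \<star> mid M Y) \<cdot> (minv M (masc M X (munit M) Y) \<cdot>
     ((mid M X \<star> unit_swap Y) \<cdot> (masc M X Y (munit M) \<cdot> minv M (mru M (X \<odot> Y))))))
   = minv M (mlu M (X \<odot> Y))"
proof -
  have "(mid M X \<star> unit_swap Y) \<cdot> (masc M X Y (munit M) \<cdot> minv M (mru M (X \<odot> Y)))
      = mid M X \<star> minv M (mlu M Y)"
    using X Y by (simp add: assoc_runit_inv_tensor id_tensor_comp[symmetric] unit_swap_runit_inv)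
  moreover have "(unit_swap X \<star> mid M Y) \<cdot> (minv M (masc M X (munit M) Y) \<cdot> (mid M X \<star> minv M (mlu M Y)))
      = minv M (mlu M X) \<star> mid M Y"
    using X Y by (simp add: triangle_inv comp_tensor_id[symmetric] unit_swap_runit_inv)
  ultimately show ?thesis
    using X Y by (simp add: assoc_lunit_inv_tensor)
qed

lemma unit_swap_twice:
  assumes X: "X \<in> mOb M"
  shows "minv M (masc M (munit M) (munit M) X) \<cdot> ((mid M (munit M) \<star> unit_swap X) \<cdot>
     (masc M (munit M) X (munit M) \<cdot> ((unit_swap X \<star> mid M (munit M)) \<cdot>
     (minv M (masc M X (munit M) (munit M)) \<cdot> ((mid M X \<star> minv M (mlu M (munit M))) \<cdot> minv M (mru M X))))))
   = (minv M (mlu M (munit M)) \<star> mid M X) \<cdot> minv M (mlu M X)"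
proof -
  let ?I = "munit M"
  have "(unit_swap X \<star> mid M ?I) \<cdot>
        (minv M (masc M X ?I ?I) \<cdot> ((mid M X \<star> minv M (mlu M ?I)) \<cdot> minv M (mru M X)))
      = (unit_swap X \<star> mid M ?I) \<cdot> ((minv M (mru M X) \<star> mid M ?I) \<cdot> minv M (mru M X))"
    using X triangle_inv[OF X, of ?I] by (simp add: comp_assoc[symmetric])
  also have "\<dots> = (minv M (mlu M X) \<star> mid M ?I) \<cdot> minv M (mru M X)"
    using X by (simp add: comp_assoc[symmetric] comp_tensor_id[symmetric] unit_swap_runit_inv)
  also have "\<dots> = minv M (mru M (?I \<odot> X)) \<cdot> minv M (mlu M X)"
    using runit_inv_naturality[of "minv M (mlu M X)"] X by simp
  finally have swap_right: "(unit_swap X \<star> mid M ?I) \<cdot>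
        (minv M (masc M X ?I ?I) \<cdot> ((mid M X \<star> minv M (mlu M ?I)) \<cdot> minv M (mru M X)))
      = minv M (mru M (?I \<odot> X)) \<cdot> minv M (mlu M X)" .
  have "(mid M ?I \<star> unit_swap X) \<cdot> (masc M ?I X ?I \<cdot> (minv M (mru M (?I \<odot> X)) \<cdot> minv M (mlu M X)))
      = (mid M ?I \<star> unit_swap X) \<cdot> ((mid M ?I \<star> minv M (mru M X)) \<cdot> minv M (mlu M X))"
    using X assoc_runit_inv_tensor[OF _ X, of ?I] by (simp add: comp_assoc[symmetric])
  also have "\<dots> = (mid M ?I \<star> minv M (mlu M X)) \<cdot> minv M (mlu M X)"
    using X by (simp add: comp_assoc[symmetric] id_tensor_comp[symmetric] unit_swap_runit_inv)
  also have "\<dots> = minv M (mlu M (?I \<odot> X)) \<cdot> minv M (mlu M X)"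
    using lunit_inv_naturality[of "minv M (mlu M X)"] X by simp
  finally have swap_left: "(mid M ?I \<star> unit_swap X) \<cdot>
        (masc M ?I X ?I \<cdot> (minv M (mru M (?I \<odot> X)) \<cdot> minv M (mlu M X)))
      = minv M (mlu M (?I \<odot> X)) \<cdot> minv M (mlu M X)" .
  have "minv M (masc M ?I ?I X) \<cdot> (minv M (mlu M (?I \<odot> X)) \<cdot> minv M (mlu M X))
      = (minv M (mlu M ?I) \<star> mid M X) \<cdot> minv M (mlu M X)"
    using X lunit_tensor_inv[OF _ X, of ?I] by (simp add: comp_assoc[symmetric])
  then show ?thesis
    by (simp only: swap_right swap_left)
qed

lemma assoc_inv_unit_lunit_inv:
  "minv M (masc M (munit M) (munit M) (munit M)) \<cdot>
     ((mid M (munit M) \<star> minv M (mlu M (munit M))) \<cdot> minv M (mlu M (munit M)))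
   = (minv M (mlu M (munit M)) \<star> mid M (munit M)) \<cdot> minv M (mlu M (munit M))"
  using triangle_inv[of "munit M" "munit M"] lunit_unit_eq_runit_unit by (simp add: comp_assoc[symmetric])

lemma assoc_unit_lunit_inv:
  "masc M (munit M) (munit M) (munit M) \<cdot>
     ((minv M (mlu M (munit M)) \<star> mid M (munit M)) \<cdot> minv M (mlu M (munit M)))
   = (mid M (munit M) \<star> minv M (mlu M (munit M))) \<cdot> minv M (mlu M (munit M))"
  by (simp add: assoc_inv_unit_lunit_inv[symmetric] comp_assoc[symmetric])

end

section \<open>Graded categories and pointwise families\<close>

lemma graded_catI:
  assumes "\<And>\<alpha> A B f. \<alpha> \<in> mAr U \<Longrightarrow> A \<in> gOb D \<Longrightarrow> B \<in> gOb D \<Longrightarrow> f \<in> gHom D (mcod U \<alpha>) A B \<Longrightarrow>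
      gre D \<alpha> A B f \<in> gHom D (mdom U \<alpha>) A B"
    and "\<And>X A B f. X \<in> mOb U \<Longrightarrow> A \<in> gOb D \<Longrightarrow> B \<in> gOb D \<Longrightarrow> f \<in> gHom D X A B \<Longrightarrow>
      gre D (mid U X) A B f = f"
    and "\<And>\<alpha> \<beta> A B f. \<alpha> \<in> mAr U \<Longrightarrow> \<beta> \<in> mAr U \<Longrightarrow> mcod U \<beta> = mdom U \<alpha> \<Longrightarrow>
      A \<in> gOb D \<Longrightarrow> B \<in> gOb D \<Longrightarrow> f \<in> gHom D (mcod U \<alpha>) A B \<Longrightarrow>
      gre D (mcomp U \<alpha> \<beta>) A B f = gre D \<beta> A B (gre D \<alpha> A B f)"
    and "\<And>X Y A B E f g. X \<in> mOb U \<Longrightarrow> Y \<in> mOb U \<Longrightarrow> A \<in> gOb D \<Longrightarrow> B \<in> gOb D \<Longrightarrow> E \<in> gOb D \<Longrightarrow>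
      f \<in> gHom D X A B \<Longrightarrow> g \<in> gHom D Y B E \<Longrightarrow> gcmp D Y X A B E g f \<in> gHom D (mtO U Y X) A E"
    and "\<And>A. A \<in> gOb D \<Longrightarrow> gid D A \<in> gHom D (munit U) A A"
    and "\<And>\<alpha> \<beta> A B E f g. \<alpha> \<in> mAr U \<Longrightarrow> \<beta> \<in> mAr U \<Longrightarrow> A \<in> gOb D \<Longrightarrow> B \<in> gOb D \<Longrightarrow> E \<in> gOb D \<Longrightarrow>
      f \<in> gHom D (mcod U \<alpha>) A B \<Longrightarrow> g \<in> gHom D (mcod U \<beta>) B E \<Longrightarrow>
      gcmp D (mdom U \<beta>) (mdom U \<alpha>) A B E (gre D \<beta> B E g) (gre D \<alpha> A B f)
        = gre D (mtM U \<beta> \<alpha>) A E (gcmp D (mcod U \<beta>) (mcod U \<alpha>) A B E g f)"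
    and "\<And>X Y Z A B E K f g h. X \<in> mOb U \<Longrightarrow> Y \<in> mOb U \<Longrightarrow> Z \<in> mOb U \<Longrightarrow>
      A \<in> gOb D \<Longrightarrow> B \<in> gOb D \<Longrightarrow> E \<in> gOb D \<Longrightarrow> K \<in> gOb D \<Longrightarrow>
      f \<in> gHom D X A B \<Longrightarrow> g \<in> gHom D Y B E \<Longrightarrow> h \<in> gHom D Z E K \<Longrightarrow>
      gcmp D (mtO U Z Y) X A B K (gcmp D Z Y B E K h g) f
        = gre D (masc U Z Y X) A K (gcmp D Z (mtO U Y X) A E K h (gcmp D Y X A B E g f))"
    and "\<And>X A B f. X \<in> mOb U \<Longrightarrow> A \<in> gOb D \<Longrightarrow> B \<in> gOb D \<Longrightarrow> f \<in> gHom D X A B \<Longrightarrow>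
      gcmp D X (munit U) A A B f (gid D A) = gre D (mru U X) A B f"
    and "\<And>X A B f. X \<in> mOb U \<Longrightarrow> A \<in> gOb D \<Longrightarrow> B \<in> gOb D \<Longrightarrow> f \<in> gHom D X A B \<Longrightarrow>
      gcmp D (munit U) X A B B (gid D B) f = gre D (mlu U X) A B f"
  shows "graded_cat U D"
  unfolding graded_cat_def by (intro conjI ballI allI impI; rule assms; assumption)

context
  fixes U :: "('o, 'm) mcat" and D :: "('o, 'm, 'c, 'h) gcat"
  assumes graded: "graded_cat U D"
begin

lemma graded_cat_reindex_in_hom:
  "\<alpha> \<in> mAr U \<Longrightarrow> A \<in> gOb D \<Longrightarrow> B \<in> gOb D \<Longrightarrow> f \<in> gHom D (mcod U \<alpha>) A B \<Longrightarrow>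
   gre D \<alpha> A B f \<in> gHom D (mdom U \<alpha>) A B"
  and graded_cat_reindex_id:
  "X \<in> mOb U \<Longrightarrow> A \<in> gOb D \<Longrightarrow> B \<in> gOb D \<Longrightarrow> f \<in> gHom D X A B \<Longrightarrow> gre D (mid U X) A B f = f"
  and graded_cat_reindex_comp:
  "\<alpha> \<in> mAr U \<Longrightarrow> \<beta> \<in> mAr U \<Longrightarrow> mcod U \<beta> = mdom U \<alpha> \<Longrightarrow>
   A \<in> gOb D \<Longrightarrow> B \<in> gOb D \<Longrightarrow> f \<in> gHom D (mcod U \<alpha>) A B \<Longrightarrow>
   gre D (mcomp U \<alpha> \<beta>) A B f = gre D \<beta> A B (gre D \<alpha> A B f)"
  and graded_cat_comp_in_hom:
  "X \<in> mOb U \<Longrightarrow> Y \<in> mOb U \<Longrightarrow> A \<in> gOb D \<Longrightarrow> B \<in> gOb D \<Longrightarrow> E \<in> gOb D \<Longrightarrow>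
   f \<in> gHom D X A B \<Longrightarrow> g \<in> gHom D Y B E \<Longrightarrow> gcmp D Y X A B E g f \<in> gHom D (mtO U Y X) A E"
  and graded_cat_id_in_hom:
  "A \<in> gOb D \<Longrightarrow> gid D A \<in> gHom D (munit U) A A"
  and graded_cat_comp_reindex:
  "\<alpha> \<in> mAr U \<Longrightarrow> \<beta> \<in> mAr U \<Longrightarrow> A \<in> gOb D \<Longrightarrow> B \<in> gOb D \<Longrightarrow> E \<in> gOb D \<Longrightarrow>
   f \<in> gHom D (mcod U \<alpha>) A B \<Longrightarrow> g \<in> gHom D (mcod U \<beta>) B E \<Longrightarrow>
   gcmp D (mdom U \<beta>) (mdom U \<alpha>) A B E (gre D \<beta> B E g) (gre D \<alpha> A B f)
     = gre D (mtM U \<beta> \<alpha>) A E (gcmp D (mcod U \<beta>) (mcod U \<alpha>) A B E g f)"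
  and graded_cat_comp_assoc:
  "X \<in> mOb U \<Longrightarrow> Y \<in> mOb U \<Longrightarrow> Z \<in> mOb U \<Longrightarrow>
   A \<in> gOb D \<Longrightarrow> B \<in> gOb D \<Longrightarrow> E \<in> gOb D \<Longrightarrow> K \<in> gOb D \<Longrightarrow>
   f \<in> gHom D X A B \<Longrightarrow> g \<in> gHom D Y B E \<Longrightarrow> h \<in> gHom D Z E K \<Longrightarrow>
   gcmp D (mtO U Z Y) X A B K (gcmp D Z Y B E K h g) f
     = gre D (masc U Z Y X) A K (gcmp D Z (mtO U Y X) A E K h (gcmp D Y X A B E g f))"
  and graded_cat_comp_id_right:
  "X \<in> mOb U \<Longrightarrow> A \<in> gOb D \<Longrightarrow> B \<in> gOb D \<Longrightarrow> f \<in> gHom D X A B \<Longrightarrow>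
   gcmp D X (munit U) A A B f (gid D A) = gre D (mru U X) A B f"
  and graded_cat_comp_id_left:
  "X \<in> mOb U \<Longrightarrow> A \<in> gOb D \<Longrightarrow> B \<in> gOb D \<Longrightarrow> f \<in> gHom D X A B \<Longrightarrow>
   gcmp D (munit U) X A B B (gid D B) f = gre D (mlu U X) A B f"
  using graded unfolding graded_cat_def by - (elim conjE, simp)+

end

(* Families over the index set I, undefined off I so that componentwise equations are
   equations of functions; P cuts the admissible families out of the pointwise hom-sets. *)
definition pointwise_gcat ::
  "'f set \<Rightarrow> 'a set \<Rightarrow> ('o, 'm, 'c, 'h) gcat \<Rightarrow> ('f \<Rightarrow> 'a \<Rightarrow> 'c)
    \<Rightarrow> ('o \<Rightarrow> 'f \<Rightarrow> 'f \<Rightarrow> ('a \<Rightarrow> 'h) \<Rightarrow> bool) \<Rightarrow> ('o, 'm, 'f, 'a \<Rightarrow> 'h) gcat" where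
  "pointwise_gcat Obs I D ob P = \<lparr>
     gOb = Obs,
     gHom = (\<lambda>X F G. {\<phi>. (\<forall>a. a \<notin> I \<longrightarrow> \<phi> a = undefined) \<and>
              (\<forall>a\<in>I. \<phi> a \<in> gHom D X (ob F a) (ob G a)) \<and> P X F G \<phi>}),
     gre = (\<lambda>\<alpha> F G \<phi> a. if a \<in> I then gre D \<alpha> (ob F a) (ob G a) (\<phi> a) else undefined),
     gcmp = (\<lambda>Y X F G H \<psi> \<phi> a. if a \<in> I
              then gcmp D Y X (ob F a) (ob G a) (ob H a) (\<psi> a) (\<phi> a) else undefined),
     gid = (\<lambda>F a. if a \<in> I then gid D (ob F a) else undefined) \<rparr>"

lemma pointwise_gcat_simps:
  "gOb (pointwise_gcat Obs I D ob P) = Obs"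
  "\<phi> \<in> gHom (pointwise_gcat Obs I D ob P) X F G \<longleftrightarrow> (\<forall>a. a \<notin> I \<longrightarrow> \<phi> a = undefined) \<and>
     (\<forall>a\<in>I. \<phi> a \<in> gHom D X (ob F a) (ob G a)) \<and> P X F G \<phi>"
  "gre (pointwise_gcat Obs I D ob P) \<alpha> F G \<phi> a
     = (if a \<in> I then gre D \<alpha> (ob F a) (ob G a) (\<phi> a) else undefined)"
  "gcmp (pointwise_gcat Obs I D ob P) Y X F G H \<psi> \<phi> a
     = (if a \<in> I then gcmp D Y X (ob F a) (ob G a) (ob H a) (\<psi> a) (\<phi> a) else undefined)"
  "gid (pointwise_gcat Obs I D ob P) F a = (if a \<in> I then gid D (ob F a) else undefined)"
  unfolding pointwise_gcat_def by simp_all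

lemma graded_cat_pointwise_gcat:
  fixes U :: "('o, 'm) mcat" and D :: "('o, 'm, 'c, 'h) gcat"
    and Obs :: "'f set" and I :: "'a set" and ob :: "'f \<Rightarrow> 'a \<Rightarrow> 'c"
    and P :: "'o \<Rightarrow> 'f \<Rightarrow> 'f \<Rightarrow> ('a \<Rightarrow> 'h) \<Rightarrow> bool"
  defines "E \<equiv> pointwise_gcat Obs I D ob P"
  assumes D: "graded_cat U D"
    and ob: "\<And>F a. F \<in> Obs \<Longrightarrow> a \<in> I \<Longrightarrow> ob F a \<in> gOb D"
    and P_reindex: "\<And>\<alpha> F G \<phi>. \<alpha> \<in> mAr U \<Longrightarrow> F \<in> Obs \<Longrightarrow> G \<in> Obs \<Longrightarrow>
      \<phi> \<in> gHom E (mcod U \<alpha>) F G \<Longrightarrow> P (mdom U \<alpha>) F G (gre E \<alpha> F G \<phi>)"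
    and P_comp: "\<And>X Y F G H \<phi> \<psi>. X \<in> mOb U \<Longrightarrow> Y \<in> mOb U \<Longrightarrow> F \<in> Obs \<Longrightarrow> G \<in> Obs \<Longrightarrow> H \<in> Obs \<Longrightarrow>
      \<phi> \<in> gHom E X F G \<Longrightarrow> \<psi> \<in> gHom E Y G H \<Longrightarrow> P (mtO U Y X) F H (gcmp E Y X F G H \<psi> \<phi>)"
    and P_id: "\<And>F. F \<in> Obs \<Longrightarrow> P (munit U) F F (gid E F)"
  shows "graded_cat U E"
proof -
  note E_ob = pointwise_gcat_simps(1)[of Obs I D ob P, folded E_def]
    and E_hom = pointwise_gcat_simps(2)[of _ Obs I D ob P, folded E_def]
    and E_reindex = pointwise_gcat_simps(3)[of Obs I D ob P, folded E_def]
    and E_comp = pointwise_gcat_simps(4)[of Obs I D ob P, folded E_def]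
    and E_id = pointwise_gcat_simps(5)[of Obs I D ob P, folded E_def]
  have hom_at: "\<phi> a \<in> gHom D X (ob F a) (ob G a)" if "\<phi> \<in> gHom E X F G" "a \<in> I" for \<phi> X F G a
    using that by (simp add: E_hom)
  have hom_undefined: "\<phi> a = undefined" if "\<phi> \<in> gHom E X F G" "a \<notin> I" for \<phi> X F G a
    using that by (simp add: E_hom)
  note D_axioms = graded_cat_reindex_in_hom[OF D] graded_cat_reindex_id[OF D]
    graded_cat_reindex_comp[OF D] graded_cat_comp_in_hom[OF D] graded_cat_id_in_hom[OF D]
    graded_cat_comp_reindex[OF D] graded_cat_comp_assoc[OF D]
    graded_cat_comp_id_right[OF D] graded_cat_comp_id_left[OF D]
  show ?thesis
  proof (rule graded_catI)
    fix \<alpha> F G \<phi> assume \<alpha>: "\<alpha> \<in> mAr U" and FG: "F \<in> gOb E" "G \<in> gOb E"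
      and \<phi>: "\<phi> \<in> gHom E (mcod U \<alpha>) F G"
    then have "P (mdom U \<alpha>) F G (gre E \<alpha> F G \<phi>)"
      using P_reindex by (simp add: E_ob)
    then show "gre E \<alpha> F G \<phi> \<in> gHom E (mdom U \<alpha>) F G"
      using \<alpha> FG hom_at[OF \<phi>] by (simp add: E_ob E_hom E_reindex D_axioms ob)
  next
    fix X Y F G H \<phi> \<psi> assume XY: "X \<in> mOb U" "Y \<in> mOb U" and FGH: "F \<in> gOb E" "G \<in> gOb E" "H \<in> gOb E"
      and \<phi>: "\<phi> \<in> gHom E X F G" and \<psi>: "\<psi> \<in> gHom E Y G H"
    then have "P (mtO U Y X) F H (gcmp E Y X F G H \<psi> \<phi>)"
      using P_comp by (simp add: E_ob)
    then show "gcmp E Y X F G H \<psi> \<phi> \<in> gHom E (mtO U Y X) F H"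
      using XY FGH hom_at[OF \<phi>] hom_at[OF \<psi>] by (simp add: E_ob E_hom E_comp D_axioms ob)
  next
    fix F assume "F \<in> gOb E"
    then show "gid E F \<in> gHom E (munit U) F F"
      using P_id by (simp add: E_ob E_hom E_id D_axioms ob)
  next
    fix X F G \<phi> assume "X \<in> mOb U" "F \<in> gOb E" "G \<in> gOb E" and \<phi>: "\<phi> \<in> gHom E X F G"
    then show "gre E (mid U X) F G \<phi> = \<phi>"
      using hom_at[OF \<phi>] hom_undefined[OF \<phi>] by (intro ext) (simp add: E_ob E_reindex D_axioms ob)
  qed (intro ext; simp add: E_ob E_reindex E_comp E_id D_axioms hom_at ob)+
qed

section \<open>Bigraded categories and bigraded squares\<close>

lemma prodM_simps [simp]:
  "mOb (prodM M N) = mOb M \<times> mOb N"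
  "mAr (prodM M N) = mAr M \<times> mAr N"
  "mdom (prodM M N) (f, f') = (mdom M f, mdom N f')"
  "mcod (prodM M N) (f, f') = (mcod M f, mcod N f')"
  "mcomp (prodM M N) (g, g') (f, f') = (mcomp M g f, mcomp N g' f')"
  "mid (prodM M N) (X, X') = (mid M X, mid N X')"
  "mtO (prodM M N) (X, X') (Y, Y') = (mtO M X Y, mtO N X' Y')"
  "mtM (prodM M N) (f, f') (g, g') = (mtM M f g, mtM N f' g')"
  "munit (prodM M N) = (munit M, munit N)"
  "masc (prodM M N) (X, X') (Y, Y') (Z, Z') = (masc M X Y Z, masc N X' Y' Z')"
  "mlu (prodM M N) (X, X') = (mlu M X, mlu N X')"
  "mru (prodM M N) (X, X') = (mru M X, mru N X')"
  by (simp_all add: prodM_def)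

lemma revM_simps [simp]:
  "mOb (revM M) = mOb M" "mAr (revM M) = mAr M" "mdom (revM M) = mdom M" "mcod (revM M) = mcod M"
  "mcomp (revM M) = mcomp M" "mid (revM M) = mid M"
  "mtO (revM M) X Y = mtO M Y X" "mtM (revM M) f g = mtM M g f" "munit (revM M) = munit M"
  "masc (revM M) X Y Z = minv M (masc M Z Y X)" "mlu (revM M) = mru M" "mru (revM M) = mlu M"
  by (simp_all add: revM_def)

locale bigraded_category = V: monoidal_category V + W: monoidal_category W
  for V :: "('v, 'vm) mcat" and W :: "('w, 'wm) mcat" +
  fixes C :: "('v \<times> 'w, 'vm \<times> 'wm, 'c, 'h) gcat"
  assumes bigraded: "graded_cat (prodM V (revM W)) C"
begin

lemma reindex_in_hom [simp]:
  "\<alpha> \<in> mAr V \<Longrightarrow> \<alpha>' \<in> mAr W \<Longrightarrow> A \<in> gOb C \<Longrightarrow> B \<in> gOb C \<Longrightarrow> f \<in> gHom C (mcod V \<alpha>, mcod W \<alpha>') A B \<Longrightarrow>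
   mdom V \<alpha> = Y \<Longrightarrow> mdom W \<alpha>' = Y' \<Longrightarrow> gre C (\<alpha>, \<alpha>') A B f \<in> gHom C (Y, Y') A B"
  using graded_cat_reindex_in_hom[OF bigraded, of "(\<alpha>, \<alpha>')"] by simp

lemma reindex_id:
  "X \<in> mOb V \<Longrightarrow> X' \<in> mOb W \<Longrightarrow> A \<in> gOb C \<Longrightarrow> B \<in> gOb C \<Longrightarrow> f \<in> gHom C (X, X') A B \<Longrightarrow>
   gre C (mid V X, mid W X') A B f = f"
  using graded_cat_reindex_id[OF bigraded, of "(X, X')"] by simp

lemma reindex_reindex [simp]:
  "\<alpha> \<in> mAr V \<Longrightarrow> \<alpha>' \<in> mAr W \<Longrightarrow> \<beta> \<in> mAr V \<Longrightarrow> \<beta>' \<in> mAr W \<Longrightarrow>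
   mcod V \<beta> = mdom V \<alpha> \<Longrightarrow> mcod W \<beta>' = mdom W \<alpha>' \<Longrightarrow>
   A \<in> gOb C \<Longrightarrow> B \<in> gOb C \<Longrightarrow> f \<in> gHom C (mcod V \<alpha>, mcod W \<alpha>') A B \<Longrightarrow>
   gre C (\<beta>, \<beta>') A B (gre C (\<alpha>, \<alpha>') A B f) = gre C (mcomp V \<alpha> \<beta>, mcomp W \<alpha>' \<beta>') A B f"
  using graded_cat_reindex_comp[OF bigraded, of "(\<alpha>, \<alpha>')" "(\<beta>, \<beta>')"] by simp

lemma comp_in_hom [simp]:
  "X \<in> mOb V \<Longrightarrow> X' \<in> mOb W \<Longrightarrow> Y \<in> mOb V \<Longrightarrow> Y' \<in> mOb W \<Longrightarrow>
   A \<in> gOb C \<Longrightarrow> B \<in> gOb C \<Longrightarrow> E \<in> gOb C \<Longrightarrow> f \<in> gHom C (X, X') A B \<Longrightarrow> g \<in> gHom C (Y, Y') B E \<Longrightarrow>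
   Z = mtO V Y X \<Longrightarrow> Z' = mtO W X' Y' \<Longrightarrow> gcmp C (Y, Y') (X, X') A B E g f \<in> gHom C (Z, Z') A E"
  using graded_cat_comp_in_hom[OF bigraded, of "(X, X')" "(Y, Y')"] by simp

lemma id_in_hom [simp]:
  "A \<in> gOb C \<Longrightarrow> Z = munit V \<Longrightarrow> Z' = munit W \<Longrightarrow> gid C A \<in> gHom C (Z, Z') A A"
  using graded_cat_id_in_hom[OF bigraded] by simp

lemma comp_reindex:
  "\<alpha> \<in> mAr V \<Longrightarrow> \<alpha>' \<in> mAr W \<Longrightarrow> \<beta> \<in> mAr V \<Longrightarrow> \<beta>' \<in> mAr W \<Longrightarrow>
   A \<in> gOb C \<Longrightarrow> B \<in> gOb C \<Longrightarrow> E \<in> gOb C \<Longrightarrow>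
   f \<in> gHom C (mcod V \<alpha>, mcod W \<alpha>') A B \<Longrightarrow> g \<in> gHom C (mcod V \<beta>, mcod W \<beta>') B E \<Longrightarrow>
   gcmp C (mdom V \<beta>, mdom W \<beta>') (mdom V \<alpha>, mdom W \<alpha>') A B E (gre C (\<beta>, \<beta>') B E g) (gre C (\<alpha>, \<alpha>') A B f)
     = gre C (mtM V \<beta> \<alpha>, mtM W \<alpha>' \<beta>') A E (gcmp C (mcod V \<beta>, mcod W \<beta>') (mcod V \<alpha>, mcod W \<alpha>') A B E g f)"
  using graded_cat_comp_reindex[OF bigraded, of "(\<alpha>, \<alpha>')" "(\<beta>, \<beta>')"] by simp

lemma comp_assoc:
  "X \<in> mOb V \<Longrightarrow> X' \<in> mOb W \<Longrightarrow> Y \<in> mOb V \<Longrightarrow> Y' \<in> mOb W \<Longrightarrow> Z \<in> mOb V \<Longrightarrow> Z' \<in> mOb W \<Longrightarrow>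
   A \<in> gOb C \<Longrightarrow> B \<in> gOb C \<Longrightarrow> E \<in> gOb C \<Longrightarrow> K \<in> gOb C \<Longrightarrow>
   f \<in> gHom C (X, X') A B \<Longrightarrow> g \<in> gHom C (Y, Y') B E \<Longrightarrow> h \<in> gHom C (Z, Z') E K \<Longrightarrow>
   gcmp C (mtO V Z Y, mtO W Y' Z') (X, X') A B K (gcmp C (Z, Z') (Y, Y') B E K h g) f
     = gre C (masc V Z Y X, minv W (masc W X' Y' Z')) A K
         (gcmp C (Z, Z') (mtO V Y X, mtO W X' Y') A E K h (gcmp C (Y, Y') (X, X') A B E g f))"
  using graded_cat_comp_assoc[OF bigraded, of "(X, X')" "(Y, Y')" "(Z, Z')"] by simp

lemma comp_id_right:
  "X \<in> mOb V \<Longrightarrow> X' \<in> mOb W \<Longrightarrow> A \<in> gOb C \<Longrightarrow> B \<in> gOb C \<Longrightarrow> f \<in> gHom C (X, X') A B \<Longrightarrow>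
   gcmp C (X, X') (munit V, munit W) A A B f (gid C A) = gre C (mru V X, mlu W X') A B f"
  using graded_cat_comp_id_right[OF bigraded, of "(X, X')"] by simp

lemma comp_id_left:
  "X \<in> mOb V \<Longrightarrow> X' \<in> mOb W \<Longrightarrow> A \<in> gOb C \<Longrightarrow> B \<in> gOb C \<Longrightarrow> f \<in> gHom C (X, X') A B \<Longrightarrow>
   gcmp C (munit V, munit W) (X, X') A B B (gid C B) f = gre C (mlu V X, mru W X') A B f"
  using graded_cat_comp_id_left[OF bigraded, of "(X, X')"] by simp

lemma comp_reindex_left:
  "\<beta> \<in> mAr V \<Longrightarrow> \<beta>' \<in> mAr W \<Longrightarrow> X \<in> mOb V \<Longrightarrow> X' \<in> mOb W \<Longrightarrow> mdom V \<beta> = Y \<Longrightarrow> mdom W \<beta>' = Y' \<Longrightarrow>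
   A \<in> gOb C \<Longrightarrow> B \<in> gOb C \<Longrightarrow> E \<in> gOb C \<Longrightarrow>
   f \<in> gHom C (X, X') A B \<Longrightarrow> g \<in> gHom C (mcod V \<beta>, mcod W \<beta>') B E \<Longrightarrow>
   gcmp C (Y, Y') (X, X') A B E (gre C (\<beta>, \<beta>') B E g) f
     = gre C (mtM V \<beta> (mid V X), mtM W (mid W X') \<beta>') A E (gcmp C (mcod V \<beta>, mcod W \<beta>') (X, X') A B E g f)"
  using comp_reindex[of "mid V X" "mid W X'" \<beta> \<beta>' A B E f g] by (simp add: reindex_id)

lemma comp_reindex_right:
  "\<alpha> \<in> mAr V \<Longrightarrow> \<alpha>' \<in> mAr W \<Longrightarrow> Y \<in> mOb V \<Longrightarrow> Y' \<in> mOb W \<Longrightarrow> mdom V \<alpha> = X \<Longrightarrow> mdom W \<alpha>' = X' \<Longrightarrow>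
   A \<in> gOb C \<Longrightarrow> B \<in> gOb C \<Longrightarrow> E \<in> gOb C \<Longrightarrow>
   f \<in> gHom C (mcod V \<alpha>, mcod W \<alpha>') A B \<Longrightarrow> g \<in> gHom C (Y, Y') B E \<Longrightarrow>
   gcmp C (Y, Y') (X, X') A B E g (gre C (\<alpha>, \<alpha>') A B f)
     = gre C (mtM V (mid V Y) \<alpha>, mtM W \<alpha>' (mid W Y')) A E (gcmp C (Y, Y') (mcod V \<alpha>, mcod W \<alpha>') A B E g f)"
  using comp_reindex[of \<alpha> \<alpha>' "mid V Y" "mid W Y'" A B E f g] by (simp add: reindex_id)

lemma reindex_inv_iso:
  assumes "miso V \<gamma>" "miso W \<gamma>'" "A \<in> gOb C" "B \<in> gOb C" "u \<in> gHom C (mcod V \<gamma>, mcod W \<gamma>') A B"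
  shows "gre C (minv V \<gamma>, minv W \<gamma>') A B (gre C (\<gamma>, \<gamma>') A B u) = u"
  using assms V.iso_in_ar[OF assms(1)] W.iso_in_ar[OF assms(2)] by (simp add: reindex_id)

lemma reindex_eq_imp_eq_reindex:
  assumes "miso V \<gamma>" "miso W \<gamma>'" "A \<in> gOb C" "B \<in> gOb C" "u \<in> gHom C (mcod V \<gamma>, mcod W \<gamma>') A B"
    and "gre C (\<gamma>, \<gamma>') A B u = v"
  shows "u = gre C (minv V \<gamma>, minv W \<gamma>') A B v"
  using reindex_inv_iso[OF assms(1-5)] assms(6) by simp

end

lemma underW_simps:
  "gOb (underW V W C) = gOb C"
  "gHom (underW V W C) X' A B = gHom C (munit V, X') A B"
  "gre (underW V W C) \<beta> A B \<phi> = gre C (mid V (munit V), \<beta>) A B \<phi>"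
  "gcmp (underW V W C) Y' X' A B E \<psi> \<phi> =
     gre C (minv V (mlu V (munit V)), mid W (mtO W X' Y')) A E (gcmp C (munit V, Y') (munit V, X') A B E \<psi> \<phi>)"
  "gid (underW V W C) A = gid C A"
  unfolding underW_def by simp_all

lemma underV_simps:
  "gOb (underV V W C) = gOb C"
  "gHom (underV V W C) X A B = gHom C (X, munit W) A B"
  "gre (underV V W C) \<alpha> A B f = gre C (\<alpha>, mid W (munit W)) A B f"
  "gcmp (underV V W C) Y X A B E g f =
     gre C (mid V (mtO V Y X), minv W (mlu W (munit W))) A E (gcmp C (Y, munit W) (X, munit W) A B E g f)"
  "gid (underV V W C) A = gid C A"
  unfolding underV_def by simp_all

lemma bsq_in_hom:
  assumes "bsq V W C X X' A A' B B' f g \<phi> \<phi>'"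
  shows "f \<in> gHom C (X, munit W) A A'" "g \<in> gHom C (X, munit W) B B'"
    "\<phi> \<in> gHom C (munit V, X') A B" "\<phi>' \<in> gHom C (munit V, X') A' B'"
  using assms unfolding bsq_def by auto

context bigraded_category
begin

lemma bsq_comp_eq:
  assumes sq: "bsq V W C X X' A A' B B' f g \<phi> \<phi>'"
    and X: "X \<in> mOb V" and X': "X' \<in> mOb W" and ob: "A \<in> gOb C" "A' \<in> gOb C" "B \<in> gOb C" "B' \<in> gOb C"
  shows "gcmp C (X, munit W) (munit V, X') A B B' g \<phi>
       = gre C (V.unit_swap X, W.unit_swap X') A B' (gcmp C (munit V, X') (X, munit W) A A' B' \<phi>' f)"
proof -
  let ?u = "gcmp C (X, munit W) (munit V, X') A B B' g \<phi>"
  let ?v = "gcmp C (munit V, X') (X, munit W) A A' B' \<phi>' f"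
  have hom: "f \<in> gHom C (X, munit W) A A'" "g \<in> gHom C (X, munit W) B B'"
      "\<phi> \<in> gHom C (munit V, X') A B" "\<phi>' \<in> gHom C (munit V, X') A' B'"
    and eq: "gre C (minv V (mru V X), minv W (mru W X')) A B' ?u
           = gre C (minv V (mlu V X), minv W (mlu W X')) A B' ?v"
    using sq unfolding bsq_def by auto
  have "?u = gre C (mru V X, mru W X') A B' (gre C (minv V (mru V X), minv W (mru W X')) A B' ?u)"
    using reindex_inv_iso[of "minv V (mru V X)" "minv W (mru W X')" A B' ?u] X X' ob hom by simp
  also have "\<dots> = gre C (V.unit_swap X, W.unit_swap X') A B' ?v"
    unfolding eq using X X' ob hom by (simp add: V.unit_swap_def W.unit_swap_def)
  finally show ?thesis .
qed

lemma comp_bsq_right: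
  assumes sq: "bsq V W C X X' A A' B B' f g \<phi> \<phi>'"
    and X: "X \<in> mOb V" "Z \<in> mOb V" and X': "X' \<in> mOb W" "Z' \<in> mOb W"
    and ob: "A \<in> gOb C" "A' \<in> gOb C" "B \<in> gOb C" "B' \<in> gOb C" "E \<in> gOb C"
    and h: "h \<in> gHom C (Z, Z') B' E"
  shows "gcmp C (Z, Z') (mtO V X (munit V), mtO W X' (munit W)) A B' E h (gcmp C (X, munit W) (munit V, X') A B B' g \<phi>)
       = gre C (mtM V (mid V Z) (V.unit_swap X), mtM W (W.unit_swap X') (mid W Z')) A E
           (gcmp C (Z, Z') (mtO V (munit V) X, mtO W (munit W) X') A B' E h
              (gcmp C (munit V, X') (X, munit W) A A' B' \<phi>' f))"
  using sq X X' ob h unfolding bsq_comp_eq[OF sq X(1) X'(1) ob(1-4)]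
  by (subst comp_reindex_right) (simp_all add: bsq_def)

lemma comp_bsq_left:
  assumes sq: "bsq V W C X X' A A' B B' f g \<phi> \<phi>'"
    and X: "X \<in> mOb V" "Z \<in> mOb V" and X': "X' \<in> mOb W" "Z' \<in> mOb W"
    and ob: "A \<in> gOb C" "A' \<in> gOb C" "B \<in> gOb C" "B' \<in> gOb C" "P \<in> gOb C"
    and p: "p \<in> gHom C (Z, Z') P A"
  shows "gcmp C (mtO V X (munit V), mtO W X' (munit W)) (Z, Z') P A B' (gcmp C (X, munit W) (munit V, X') A B B' g \<phi>) p
       = gre C (mtM V (V.unit_swap X) (mid V Z), mtM W (mid W Z') (W.unit_swap X')) P B'
           (gcmp C (mtO V (munit V) X, mtO W (munit W) X') (Z, Z') P A B'
              (gcmp C (munit V, X') (X, munit W) A A' B' \<phi>' f) p)"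
  using sq X X' ob p unfolding bsq_comp_eq[OF sq X(1) X'(1) ob(1-4)]
  by (subst comp_reindex_left) (simp_all add: bsq_def)

(* The composite is rearranged along H(qp), (Hq)p, (qG)p, q(Gp), q(pF), (qp)F, each step
   reindexing by a canonical isomorphism; coherence identifies the isomorphisms on both sides. *)
lemma bsq_underW_comp:
  assumes X: "X \<in> mOb V" and X': "X' \<in> mOb W" and Y': "Y' \<in> mOb W"
    and ob: "a1 \<in> gOb C" "b1 \<in> gOb C" "a2 \<in> gOb C" "b2 \<in> gOb C" "a3 \<in> gOb C" "b3 \<in> gOb C"
    and sq1: "bsq V W C X X' a1 b1 a2 b2 Ff Gf pa pb"
    and sq2: "bsq V W C X Y' a2 b2 a3 b3 Gf Hf qa qb"
  shows "bsq V W C X (mtO W X' Y') a1 b1 a3 b3 Ff Hf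
           (gcmp (underW V W C) Y' X' a1 a2 a3 qa pa) (gcmp (underW V W C) Y' X' b1 b2 b3 qb pb)"
proof -
  let ?I = "munit V" and ?J = "munit W"
  note hom = bsq_in_hom[OF sq1] bsq_in_hom[OF sq2]
  note facts = X X' Y' ob hom
  let ?H_qp = "gcmp C (X, ?J) (mtO V ?I ?I, mtO W X' Y') a1 a3 b3 Hf (gcmp C (?I, Y') (?I, X') a1 a2 a3 qa pa)"
  let ?Hq_p = "gcmp C (mtO V X ?I, mtO W Y' ?J) (?I, X') a1 a2 b3 (gcmp C (X, ?J) (?I, Y') a2 a3 b3 Hf qa) pa"
  let ?qG_p = "gcmp C (mtO V ?I X, mtO W ?J Y') (?I, X') a1 a2 b3 (gcmp C (?I, Y') (X, ?J) a2 b2 b3 qb Gf) pa"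
  let ?q_Gp = "gcmp C (?I, Y') (mtO V X ?I, mtO W X' ?J) a1 b2 b3 qb (gcmp C (X, ?J) (?I, X') a1 a2 b2 Gf pa)"
  let ?q_pF = "gcmp C (?I, Y') (mtO V ?I X, mtO W ?J X') a1 b2 b3 qb (gcmp C (?I, X') (X, ?J) a1 b1 b2 pb Ff)"
  let ?qp_F = "gcmp C (mtO V ?I ?I, mtO W X' Y') (X, ?J) a1 b1 b3 (gcmp C (?I, Y') (?I, X') b1 b2 b3 qb pb) Ff"
  have lhs: "gcmp C (X, ?J) (?I, mtO W X' Y') a1 a3 b3 Hf
      (gre C (minv V (mlu V ?I), mid W (mtO W X' Y')) a1 a3 (gcmp C (?I, Y') (?I, X') a1 a2 a3 qa pa))
    = gre C (mtM V (mid V X) (minv V (mlu V ?I)), mtM W (mid W (mtO W X' Y')) (mid W ?J)) a1 b3 ?H_qp"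
    using facts by (subst comp_reindex_right) simp_all
  have H_qp: "?H_qp = gre C (minv V (masc V X ?I ?I), minv W (minv W (masc W X' Y' ?J))) a1 b3 ?Hq_p"
    using facts comp_assoc[of ?I X' ?I Y' X ?J a1 a2 a3 b3 pa qa Hf]
    by (intro reindex_eq_imp_eq_reindex) simp_all
  have Hq_p: "?Hq_p = gre C (mtM V (V.unit_swap X) (mid V ?I), mtM W (mid W X') (W.unit_swap Y')) a1 b3 ?qG_p"
    using facts by (intro comp_bsq_left[OF sq2]) simp_all
  have qG_p: "?qG_p = gre C (masc V ?I X ?I, minv W (masc W X' ?J Y')) a1 b3 ?q_Gp"
    using facts by (simp add: comp_assoc)
  have q_Gp: "?q_Gp = gre C (mtM V (mid V ?I) (V.unit_swap X), mtM W (W.unit_swap X') (mid W Y')) a1 b3 ?q_pF"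
    using facts by (intro comp_bsq_right[OF sq1]) simp_all
  have q_pF: "?q_pF = gre C (minv V (masc V ?I ?I X), minv W (minv W (masc W ?J X' Y'))) a1 b3 ?qp_F"
    using facts comp_assoc[of X ?J ?I X' ?I Y' a1 b1 b2 b3 Ff pb qb]
    by (intro reindex_eq_imp_eq_reindex) simp_all
  have rhs: "gcmp C (?I, mtO W X' Y') (X, ?J) a1 b1 b3
      (gre C (minv V (mlu V ?I), mid W (mtO W X' Y')) b1 b3 (gcmp C (?I, Y') (?I, X') b1 b2 b3 qb pb)) Ff
    = gre C (mtM V (minv V (mlu V ?I)) (mid V X), mtM W (mid W ?J) (mid W (mtO W X' Y'))) a1 b3 ?qp_F"
    using facts by (subst comp_reindex_left) simp_all
  show ?thesis
    unfolding bsq_def underW_simps lhs rhs H_qp Hq_p qG_p q_Gp q_pF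
    using facts V.unit_swap_twice[OF X] W.unit_swap_tensor[OF X' Y']
    by (simp add: V.comp_assoc W.comp_assoc)
qed

lemma bsq_underV_comp:
  assumes X: "X \<in> mOb V" and Y: "Y \<in> mOb V" and X': "X' \<in> mOb W"
    and ob: "a1 \<in> gOb C" "b1 \<in> gOb C" "a2 \<in> gOb C" "b2 \<in> gOb C" "a3 \<in> gOb C" "b3 \<in> gOb C"
    and sq1: "bsq V W C X X' a1 a2 b1 b2 pa pb Fg Gg"
    and sq2: "bsq V W C Y X' a2 a3 b2 b3 qa qb Gg Hg"
  shows "bsq V W C (mtO V Y X) X' a1 a3 b1 b3
           (gcmp (underV V W C) Y X a1 a2 a3 qa pa) (gcmp (underV V W C) Y X b1 b2 b3 qb pb) Fg Hg"
proof -
  let ?I = "munit V" and ?J = "munit W"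
  note hom = bsq_in_hom[OF sq1] bsq_in_hom[OF sq2]
  note facts = X Y X' ob hom
  let ?qp_F = "gcmp C (mtO V Y X, mtO W ?J ?J) (?I, X') a1 b1 b3 (gcmp C (Y, ?J) (X, ?J) b1 b2 b3 qb pb) Fg"
  let ?q_pF = "gcmp C (Y, ?J) (mtO V X ?I, mtO W X' ?J) a1 b2 b3 qb (gcmp C (X, ?J) (?I, X') a1 b1 b2 pb Fg)"
  let ?q_Gp = "gcmp C (Y, ?J) (mtO V ?I X, mtO W ?J X') a1 b2 b3 qb (gcmp C (?I, X') (X, ?J) a1 a2 b2 Gg pa)"
  let ?qG_p = "gcmp C (mtO V Y ?I, mtO W X' ?J) (X, ?J) a1 a2 b3 (gcmp C (Y, ?J) (?I, X') a2 b2 b3 qb Gg) pa"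
  let ?Hq_p = "gcmp C (mtO V ?I Y, mtO W ?J X') (X, ?J) a1 a2 b3 (gcmp C (?I, X') (Y, ?J) a2 a3 b3 Hg qa) pa"
  let ?H_qp = "gcmp C (?I, X') (mtO V Y X, mtO W ?J ?J) a1 a3 b3 Hg (gcmp C (Y, ?J) (X, ?J) a1 a2 a3 qa pa)"
  have lhs: "gcmp C (mtO V Y X, ?J) (?I, X') a1 b1 b3
      (gre C (mid V (mtO V Y X), minv W (mlu W ?J)) b1 b3 (gcmp C (Y, ?J) (X, ?J) b1 b2 b3 qb pb)) Fg
    = gre C (mtM V (mid V (mtO V Y X)) (mid V ?I), mtM W (mid W X') (minv W (mlu W ?J))) a1 b3 ?qp_F"
    using facts by (subst comp_reindex_left) simp_all
  have qp_F: "?qp_F = gre C (masc V Y X ?I, minv W (masc W X' ?J ?J)) a1 b3 ?q_pF"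
    using facts by (simp add: comp_assoc)
  have q_pF: "?q_pF = gre C (mtM V (mid V Y) (V.unit_swap X), mtM W (W.unit_swap X') (mid W ?J)) a1 b3 ?q_Gp"
    using facts by (intro comp_bsq_right[OF sq1]) simp_all
  have q_Gp: "?q_Gp = gre C (minv V (masc V Y ?I X), minv W (minv W (masc W ?J X' ?J))) a1 b3 ?qG_p"
    using facts comp_assoc[of X ?J ?I X' Y ?J a1 a2 b2 b3 pa Gg qb]
    by (intro reindex_eq_imp_eq_reindex) simp_all
  have qG_p: "?qG_p = gre C (mtM V (V.unit_swap Y) (mid V X), mtM W (mid W ?J) (W.unit_swap X')) a1 b3 ?Hq_p"
    using facts by (intro comp_bsq_left[OF sq2]) simp_all
  have Hq_p: "?Hq_p = gre C (masc V ?I Y X, minv W (masc W ?J ?J X')) a1 b3 ?H_qp"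
    using facts by (simp add: comp_assoc)
  have rhs: "gcmp C (?I, X') (mtO V Y X, ?J) a1 a3 b3 Hg
      (gre C (mid V (mtO V Y X), minv W (mlu W ?J)) a1 a3 (gcmp C (Y, ?J) (X, ?J) a1 a2 a3 qa pa))
    = gre C (mtM V (mid V ?I) (mid V (mtO V Y X)), mtM W (minv W (mlu W ?J)) (mid W X')) a1 b3 ?H_qp"
    using facts by (subst comp_reindex_right) simp_all
  show ?thesis
    unfolding bsq_def underV_simps lhs rhs qp_F q_pF q_Gp qG_p Hq_p
    using facts V.unit_swap_tensor[OF Y X] W.unit_swap_twice[OF X']
    by (simp add: V.comp_assoc W.comp_assoc)
qed

lemma bsq_underW_reindex:
  assumes b: "\<beta> \<in> mAr W" and X: "X \<in> mOb V"
    and ob: "a1 \<in> gOb C" "b1 \<in> gOb C" "a2 \<in> gOb C" "b2 \<in> gOb C"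
    and sq: "bsq V W C X (mcod W \<beta>) a1 b1 a2 b2 Ff Gf pa pb"
  shows "bsq V W C X (mdom W \<beta>) a1 b1 a2 b2 Ff Gf
           (gre (underW V W C) \<beta> a1 a2 pa) (gre (underW V W C) \<beta> b1 b2 pb)"
proof -
  let ?I = "munit V" and ?J = "munit W" and ?X' = "mcod W \<beta>" and ?Y' = "mdom W \<beta>"
  have hom: "Ff \<in> gHom C (X, ?J) a1 b1" "Gf \<in> gHom C (X, ?J) a2 b2"
      "pa \<in> gHom C (?I, ?X') a1 a2" "pb \<in> gHom C (?I, ?X') b1 b2"
    and eq: "gre C (minv V (mru V X), minv W (mru W ?X')) a1 b2 (gcmp C (X, ?J) (?I, ?X') a1 a2 b2 Gf pa)
           = gre C (minv V (mlu V X), minv W (mlu W ?X')) a1 b2 (gcmp C (?I, ?X') (X, ?J) a1 b1 b2 pb Ff)"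
    using sq unfolding bsq_def by auto
  note facts = b X ob hom
  have "gre C (minv V (mru V X), minv W (mru W ?Y')) a1 b2
          (gcmp C (X, ?J) (?I, ?Y') a1 a2 b2 Gf (gre C (mid V ?I, \<beta>) a1 a2 pa))
      = gre C (minv V (mru V X), mcomp W (mtM W \<beta> (mid W ?J)) (minv W (mru W ?Y'))) a1 b2
          (gcmp C (X, ?J) (?I, ?X') a1 a2 b2 Gf pa)"
    using facts by (subst comp_reindex_right) simp_all
  also have "\<dots> = gre C (mid V X, \<beta>) a1 b2
      (gre C (minv V (mru V X), minv W (mru W ?X')) a1 b2 (gcmp C (X, ?J) (?I, ?X') a1 a2 b2 Gf pa))"
    using facts W.runit_inv_naturality[OF b] by simp
  also have "\<dots> = gre C (mid V X, \<beta>) a1 b2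
      (gre C (minv V (mlu V X), minv W (mlu W ?X')) a1 b2 (gcmp C (?I, ?X') (X, ?J) a1 b1 b2 pb Ff))"
    unfolding eq ..
  also have "\<dots> = gre C (minv V (mlu V X), mcomp W (mtM W (mid W ?J) \<beta>) (minv W (mlu W ?Y'))) a1 b2
      (gcmp C (?I, ?X') (X, ?J) a1 b1 b2 pb Ff)"
    using facts W.lunit_inv_naturality[OF b] by simp
  also have "\<dots> = gre C (minv V (mlu V X), minv W (mlu W ?Y')) a1 b2
      (gcmp C (?I, ?Y') (X, ?J) a1 b1 b2 (gre C (mid V ?I, \<beta>) b1 b2 pb) Ff)"
    using facts by (subst comp_reindex_left) simp_all
  finally show ?thesis
    unfolding bsq_def underW_simps using facts by simp
qed

lemma bsq_underV_reindex:
  assumes a: "\<alpha> \<in> mAr V" and X': "X' \<in> mOb W"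
    and ob: "a1 \<in> gOb C" "b1 \<in> gOb C" "a2 \<in> gOb C" "b2 \<in> gOb C"
    and sq: "bsq V W C (mcod V \<alpha>) X' a1 a2 b1 b2 pa pb Fg Gg"
  shows "bsq V W C (mdom V \<alpha>) X' a1 a2 b1 b2
           (gre (underV V W C) \<alpha> a1 a2 pa) (gre (underV V W C) \<alpha> b1 b2 pb) Fg Gg"
proof -
  let ?I = "munit V" and ?J = "munit W" and ?X = "mcod V \<alpha>" and ?Y = "mdom V \<alpha>"
  have hom: "pa \<in> gHom C (?X, ?J) a1 a2" "pb \<in> gHom C (?X, ?J) b1 b2"
      "Fg \<in> gHom C (?I, X') a1 b1" "Gg \<in> gHom C (?I, X') a2 b2"
    and eq: "gre C (minv V (mru V ?X), minv W (mru W X')) a1 b2 (gcmp C (?X, ?J) (?I, X') a1 b1 b2 pb Fg)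
           = gre C (minv V (mlu V ?X), minv W (mlu W X')) a1 b2 (gcmp C (?I, X') (?X, ?J) a1 a2 b2 Gg pa)"
    using sq unfolding bsq_def by auto
  note facts = a X' ob hom
  have "gre C (minv V (mru V ?Y), minv W (mru W X')) a1 b2
          (gcmp C (?Y, ?J) (?I, X') a1 b1 b2 (gre C (\<alpha>, mid W ?J) b1 b2 pb) Fg)
      = gre C (mcomp V (mtM V \<alpha> (mid V ?I)) (minv V (mru V ?Y)), minv W (mru W X')) a1 b2
          (gcmp C (?X, ?J) (?I, X') a1 b1 b2 pb Fg)"
    using facts by (subst comp_reindex_left) simp_all
  also have "\<dots> = gre C (\<alpha>, mid W X') a1 b2
      (gre C (minv V (mru V ?X), minv W (mru W X')) a1 b2 (gcmp C (?X, ?J) (?I, X') a1 b1 b2 pb Fg))"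
    using facts V.runit_inv_naturality[OF a] by simp
  also have "\<dots> = gre C (\<alpha>, mid W X') a1 b2
      (gre C (minv V (mlu V ?X), minv W (mlu W X')) a1 b2 (gcmp C (?I, X') (?X, ?J) a1 a2 b2 Gg pa))"
    unfolding eq ..
  also have "\<dots> = gre C (mcomp V (mtM V (mid V ?I) \<alpha>) (minv V (mlu V ?Y)), minv W (mlu W X')) a1 b2
      (gcmp C (?I, X') (?X, ?J) a1 a2 b2 Gg pa)"
    using facts V.lunit_inv_naturality[OF a] by simp
  also have "\<dots> = gre C (minv V (mlu V ?Y), minv W (mlu W X')) a1 b2
      (gcmp C (?I, X') (?Y, ?J) a1 a2 b2 Gg (gre C (\<alpha>, mid W ?J) a1 a2 pa))"
    using facts by (subst comp_reindex_right) simp_all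
  finally show ?thesis
    unfolding bsq_def underV_simps using facts by simp
qed

lemma bsq_underW_id:
  assumes "X \<in> mOb V" "a \<in> gOb C" "b \<in> gOb C" "f \<in> gHom C (X, munit W) a b"
  shows "bsq V W C X (munit W) a b a b f f (gid C a) (gid C b)"
  using assms W.lunit_unit_eq_runit_unit
  by (simp add: bsq_def comp_id_left comp_id_right reindex_id)

lemma bsq_underV_id:
  assumes "X' \<in> mOb W" "a \<in> gOb C" "b \<in> gOb C" "f \<in> gHom C (munit V, X') a b"
  shows "bsq V W C (munit V) X' a a b b (gid C a) (gid C b) f f"
  using assms V.lunit_unit_eq_runit_unit
  by (simp add: bsq_def comp_id_left comp_id_right reindex_id)

lemma graded_cat_underW: "graded_cat (revM W) (underW V W C)"
proof (rule graded_catI)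
  fix \<alpha> \<beta> A B E f g
  assume "\<alpha> \<in> mAr (revM W)" "\<beta> \<in> mAr (revM W)" "A \<in> gOb (underW V W C)" "B \<in> gOb (underW V W C)"
    "E \<in> gOb (underW V W C)" "f \<in> gHom (underW V W C) (mcod (revM W) \<alpha>) A B"
    "g \<in> gHom (underW V W C) (mcod (revM W) \<beta>) B E"
  then show "gcmp (underW V W C) (mdom (revM W) \<beta>) (mdom (revM W) \<alpha>) A B E
      (gre (underW V W C) \<beta> B E g) (gre (underW V W C) \<alpha> A B f)
    = gre (underW V W C) (mtM (revM W) \<beta> \<alpha>) A E
      (gcmp (underW V W C) (mcod (revM W) \<beta>) (mcod (revM W) \<alpha>) A B E g f)"
    using comp_reindex[of "mid V (munit V)" \<alpha> "mid V (munit V)" \<beta> A B E f g] by (simp add: underW_simps)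
next
  fix X' Y' Z' A B E K f g h
  assume XYZ: "X' \<in> mOb (revM W)" "Y' \<in> mOb (revM W)" "Z' \<in> mOb (revM W)"
    and ob: "A \<in> gOb (underW V W C)" "B \<in> gOb (underW V W C)" "E \<in> gOb (underW V W C)" "K \<in> gOb (underW V W C)"
    and hom: "f \<in> gHom (underW V W C) X' A B" "g \<in> gHom (underW V W C) Y' B E" "h \<in> gHom (underW V W C) Z' E K"
  let ?I = "munit V"
  note facts = XYZ ob hom
  have "gcmp (underW V W C) (mtO (revM W) Z' Y') X' A B K (gcmp (underW V W C) Z' Y' B E K h g) f
      = gre C (mcomp V (masc V ?I ?I ?I) (mcomp V (mtM V (minv V (mlu V ?I)) (mid V ?I)) (minv V (mlu V ?I))),
               minv W (masc W X' Y' Z')) A K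
          (gcmp C (?I, Z') (mtO V ?I ?I, mtO W X' Y') A E K h (gcmp C (?I, Y') (?I, X') A B E g f))"
    using facts by (simp add: underW_simps comp_reindex_left comp_assoc V.comp_assoc)
  also have "\<dots> = gre C (mcomp V (mtM V (mid V ?I) (minv V (mlu V ?I))) (minv V (mlu V ?I)),
               minv W (masc W X' Y' Z')) A K
          (gcmp C (?I, Z') (mtO V ?I ?I, mtO W X' Y') A E K h (gcmp C (?I, Y') (?I, X') A B E g f))"
    by (simp only: V.assoc_unit_lunit_inv)
  also have "\<dots> = gre (underW V W C) (masc (revM W) Z' Y' X') A K
      (gcmp (underW V W C) Z' (mtO (revM W) Y' X') A E K h (gcmp (underW V W C) Y' X' A B E g f))"
    using facts by (simp add: underW_simps comp_reindex_right V.comp_assoc)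
  finally show "gcmp (underW V W C) (mtO (revM W) Z' Y') X' A B K (gcmp (underW V W C) Z' Y' B E K h g) f
      = gre (underW V W C) (masc (revM W) Z' Y' X') A K
      (gcmp (underW V W C) Z' (mtO (revM W) Y' X') A E K h (gcmp (underW V W C) Y' X' A B E g f))" .
qed (use V.lunit_unit_eq_runit_unit in \<open>simp_all add: underW_simps reindex_id comp_id_right comp_id_left\<close>)

lemma graded_cat_underV: "graded_cat V (underV V W C)"
proof (rule graded_catI)
  fix \<alpha> \<beta> A B E f g
  assume "\<alpha> \<in> mAr V" "\<beta> \<in> mAr V" "A \<in> gOb (underV V W C)" "B \<in> gOb (underV V W C)"
    "E \<in> gOb (underV V W C)" "f \<in> gHom (underV V W C) (mcod V \<alpha>) A B"
    "g \<in> gHom (underV V W C) (mcod V \<beta>) B E"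
  then show "gcmp (underV V W C) (mdom V \<beta>) (mdom V \<alpha>) A B E
      (gre (underV V W C) \<beta> B E g) (gre (underV V W C) \<alpha> A B f)
    = gre (underV V W C) (mtM V \<beta> \<alpha>) A E (gcmp (underV V W C) (mcod V \<beta>) (mcod V \<alpha>) A B E g f)"
    using comp_reindex[of \<alpha> "mid W (munit W)" \<beta> "mid W (munit W)" A B E f g] by (simp add: underV_simps)
next
  fix X Y Z A B E K f g h
  assume XYZ: "X \<in> mOb V" "Y \<in> mOb V" "Z \<in> mOb V"
    and ob: "A \<in> gOb (underV V W C)" "B \<in> gOb (underV V W C)" "E \<in> gOb (underV V W C)" "K \<in> gOb (underV V W C)"
    and hom: "f \<in> gHom (underV V W C) X A B" "g \<in> gHom (underV V W C) Y B E" "h \<in> gHom (underV V W C) Z E K"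
  let ?J = "munit W"
  note facts = XYZ ob hom
  have "gcmp (underV V W C) (mtO V Z Y) X A B K (gcmp (underV V W C) Z Y B E K h g) f
      = gre C (masc V Z Y X, mcomp W (minv W (masc W ?J ?J ?J))
               (mcomp W (mtM W (mid W ?J) (minv W (mlu W ?J))) (minv W (mlu W ?J)))) A K
          (gcmp C (Z, ?J) (mtO V Y X, mtO W ?J ?J) A E K h (gcmp C (Y, ?J) (X, ?J) A B E g f))"
    using facts by (simp add: underV_simps comp_reindex_left comp_assoc W.comp_assoc)
  also have "\<dots> = gre C (masc V Z Y X, mcomp W (mtM W (minv W (mlu W ?J)) (mid W ?J)) (minv W (mlu W ?J))) A K
          (gcmp C (Z, ?J) (mtO V Y X, mtO W ?J ?J) A E K h (gcmp C (Y, ?J) (X, ?J) A B E g f))"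
    by (simp only: W.assoc_inv_unit_lunit_inv)
  also have "\<dots> = gre (underV V W C) (masc V Z Y X) A K
      (gcmp (underV V W C) Z (mtO V Y X) A E K h (gcmp (underV V W C) Y X A B E g f))"
    using facts by (simp add: underV_simps comp_reindex_right W.comp_assoc)
  finally show "gcmp (underV V W C) (mtO V Z Y) X A B K (gcmp (underV V W C) Z Y B E K h g) f
      = gre (underV V W C) (masc V Z Y X) A K
      (gcmp (underV V W C) Z (mtO V Y X) A E K h (gcmp (underV V W C) Y X A B E g f))" .
qed (use W.lunit_unit_eq_runit_unit in \<open>simp_all add: underV_simps reindex_id comp_id_right comp_id_left\<close>)

end

section \<open>The graded functor categories\<close>

lemma funR_eq_pointwise_gcat:
  "funR V W A C = pointwise_gcat (gOb (funR V W A C)) (gOb A) (underW V W C) fob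
     (\<lambda>X' F G \<phi>. \<forall>X\<in>mOb V. \<forall>a\<in>gOb A. \<forall>b\<in>gOb A. \<forall>f\<in>gHom A X a b.
        bsq V W C X X' (fob F a) (fob F b) (fob G a) (fob G b) (fmor F X a b f) (fmor G X a b f) (\<phi> a) (\<phi> b))"
  unfolding funR_def pointwise_gcat_def gtrans_def by (simp add: underW_simps cong: if_cong)

lemma funL_eq_pointwise_gcat:
  "funL V W B C = pointwise_gcat (gOb (funL V W B C)) (gOb B) (underV V W C) fob
     (\<lambda>X F G \<phi>. \<forall>X'\<in>mOb W. \<forall>b\<in>gOb B. \<forall>b'\<in>gOb B. \<forall>g\<in>gHom B X' b b'.
        bsq V W C X X' (fob F b) (fob G b) (fob F b') (fob G b') (\<phi> b) (\<phi> b') (fmor F X' b b' g) (fmor G X' b b' g))"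
  unfolding funL_def pointwise_gcat_def by (simp add: underV_simps cong: if_cong)

lemma funR_ob_fob: "F \<in> gOb (funR V W A C) \<Longrightarrow> a \<in> gOb A \<Longrightarrow> fob F a \<in> gOb C"
  and funR_ob_fmor: "F \<in> gOb (funR V W A C) \<Longrightarrow> X \<in> mOb V \<Longrightarrow> a \<in> gOb A \<Longrightarrow> b \<in> gOb A \<Longrightarrow>
    f \<in> gHom A X a b \<Longrightarrow> fmor F X a b f \<in> gHom C (X, munit W) (fob F a) (fob F b)"
  by (simp_all add: funR_def graded_functor_def underV_simps)

lemma funL_ob_fob: "F \<in> gOb (funL V W B C) \<Longrightarrow> b \<in> gOb B \<Longrightarrow> fob F b \<in> gOb C"
  and funL_ob_fmor: "F \<in> gOb (funL V W B C) \<Longrightarrow> X' \<in> mOb W \<Longrightarrow> b \<in> gOb B \<Longrightarrow> b' \<in> gOb B \<Longrightarrow>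
    g \<in> gHom B X' b b' \<Longrightarrow> fmor F X' b b' g \<in> gHom C (munit V, X') (fob F b) (fob F b')"
  by (simp_all add: funL_def graded_functor_def underW_simps)

context bigraded_category
begin

lemma graded_cat_funR:
  fixes A :: "('v, 'vm, 'a, 'ha) gcat"
  shows "graded_cat (revM W) (funR V W A C)"
proof -
  define P :: "'w \<Rightarrow> ('v, 'a, 'c, 'ha, 'h) gfun \<Rightarrow> ('v, 'a, 'c, 'ha, 'h) gfun \<Rightarrow> ('a \<Rightarrow> 'h) \<Rightarrow> bool"
    where "P = (\<lambda>X' F G \<phi>. \<forall>X\<in>mOb V. \<forall>a\<in>gOb A. \<forall>b\<in>gOb A. \<forall>f\<in>gHom A X a b.
      bsq V W C X X' (fob F a) (fob F b) (fob G a) (fob G b) (fmor F X a b f) (fmor G X a b f) (\<phi> a) (\<phi> b))"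
  let ?Obs = "gOb (funR V W A C)"
  let ?E = "pointwise_gcat ?Obs (gOb A) (underW V W C) fob P"
  note ob = funR_ob_fob[of _ V W A C]
  have sq: "bsq V W C X X' (fob F a) (fob F b) (fob G a) (fob G b) (fmor F X a b f) (fmor G X a b f) (\<phi> a) (\<phi> b)"
    if "\<phi> \<in> gHom ?E X' F G" "X \<in> mOb V" "a \<in> gOb A" "b \<in> gOb A" "f \<in> gHom A X a b" for \<phi> X X' F G a b f
    using that by (simp add: pointwise_gcat_simps P_def)
  have "graded_cat (revM W) ?E"
  proof (rule graded_cat_pointwise_gcat[OF graded_cat_underW])
    fix F a assume "F \<in> ?Obs" "a \<in> gOb A"
    then show "fob F a \<in> gOb (underW V W C)" using ob by (simp add: underW_simps)
  next
    fix \<beta> F G \<phi> assume "\<beta> \<in> mAr (revM W)" "F \<in> ?Obs" "G \<in> ?Obs" "\<phi> \<in> gHom ?E (mcod (revM W) \<beta>) F G"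
    then show "P (mdom (revM W) \<beta>) F G (gre ?E \<beta> F G \<phi>)"
      unfolding P_def using ob sq by (simp add: pointwise_gcat_simps bsq_underW_reindex)
  next
    fix X' Y' F G H \<phi> \<psi> assume "X' \<in> mOb (revM W)" "Y' \<in> mOb (revM W)"
      "F \<in> ?Obs" "G \<in> ?Obs" "H \<in> ?Obs" and \<phi>: "\<phi> \<in> gHom ?E X' F G" and \<psi>: "\<psi> \<in> gHom ?E Y' G H"
    then show "P (mtO (revM W) Y' X') F H (gcmp ?E Y' X' F G H \<psi> \<phi>)"
      using bsq_underW_comp[OF _ _ _ ob ob ob ob ob ob sq[OF \<phi>] sq[OF \<psi>]]
      by (simp add: P_def pointwise_gcat_simps)
  next
    fix F assume "F \<in> ?Obs"
    then show "P (munit (revM W)) F F (gid ?E F)"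
      unfolding P_def using ob funR_ob_fmor[of F V W A C]
      by (simp add: pointwise_gcat_simps underW_simps bsq_underW_id)
  qed
  moreover have "funR V W A C = ?E"
    unfolding P_def by (rule funR_eq_pointwise_gcat)
  ultimately show ?thesis
    by metis
qed

lemma graded_cat_funL:
  fixes B :: "('w, 'wm, 'b, 'hb) gcat"
  shows "graded_cat V (funL V W B C)"
proof -
  define P :: "'v \<Rightarrow> ('w, 'b, 'c, 'hb, 'h) gfun \<Rightarrow> ('w, 'b, 'c, 'hb, 'h) gfun \<Rightarrow> ('b \<Rightarrow> 'h) \<Rightarrow> bool"
    where "P = (\<lambda>X F G \<phi>. \<forall>X'\<in>mOb W. \<forall>b\<in>gOb B. \<forall>b'\<in>gOb B. \<forall>g\<in>gHom B X' b b'.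
      bsq V W C X X' (fob F b) (fob G b) (fob F b') (fob G b') (\<phi> b) (\<phi> b') (fmor F X' b b' g) (fmor G X' b b' g))"
  let ?Obs = "gOb (funL V W B C)"
  let ?E = "pointwise_gcat ?Obs (gOb B) (underV V W C) fob P"
  note ob = funL_ob_fob[of _ V W B C]
  have sq: "bsq V W C X X' (fob F b) (fob G b) (fob F b') (fob G b') (\<phi> b) (\<phi> b') (fmor F X' b b' g) (fmor G X' b b' g)"
    if "\<phi> \<in> gHom ?E X F G" "X' \<in> mOb W" "b \<in> gOb B" "b' \<in> gOb B" "g \<in> gHom B X' b b'" for \<phi> X X' F G b b' g
    using that by (simp add: pointwise_gcat_simps P_def)
  have "graded_cat V ?E"
  proof (rule graded_cat_pointwise_gcat[OF graded_cat_underV])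
    fix F b assume "F \<in> ?Obs" "b \<in> gOb B"
    then show "fob F b \<in> gOb (underV V W C)" using ob by (simp add: underV_simps)
  next
    fix \<alpha> F G \<phi> assume "\<alpha> \<in> mAr V" "F \<in> ?Obs" "G \<in> ?Obs" "\<phi> \<in> gHom ?E (mcod V \<alpha>) F G"
    then show "P (mdom V \<alpha>) F G (gre ?E \<alpha> F G \<phi>)"
      unfolding P_def using ob sq by (simp add: pointwise_gcat_simps bsq_underV_reindex)
  next
    fix X Y F G H \<phi> \<psi> assume "X \<in> mOb V" "Y \<in> mOb V"
      "F \<in> ?Obs" "G \<in> ?Obs" "H \<in> ?Obs" and \<phi>: "\<phi> \<in> gHom ?E X F G" and \<psi>: "\<psi> \<in> gHom ?E Y G H"
    then show "P (mtO V Y X) F H (gcmp ?E Y X F G H \<psi> \<phi>)"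
      using bsq_underV_comp[OF _ _ _ ob ob ob ob ob ob sq[OF \<phi>] sq[OF \<psi>]]
      by (simp add: P_def pointwise_gcat_simps)
  next
    fix F assume "F \<in> ?Obs"
    then show "P (munit V) F F (gid ?E F)"
      unfolding P_def using ob funL_ob_fmor[of F V W B C]
      by (simp add: pointwise_gcat_simps underV_simps bsq_underV_id)
  qed
  moreover have "funL V W B C = ?E"
    unfolding P_def by (rule funL_eq_pointwise_gcat)
  ultimately show ?thesis
    by metis
qed

end

theorem theorem8p3:
  fixes V :: "('v, 'vm) mcat" and W :: "('w, 'wm) mcat"
    and C :: "('v \<times> 'w, 'vm \<times> 'wm, 'c, 'h) gcat"
    and A :: "('v, 'vm, 'a, 'ha) gcat"
    and B :: "('w, 'wm, 'b, 'hb) gcat"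
  assumes "monoidal_cat V" and "monoidal_cat W"
    and "graded_cat (prodM V (revM W)) C"
  shows "(graded_cat V A \<longrightarrow> graded_cat (revM W) (funR V W A C))
       \<and> (graded_cat (revM W) B \<longrightarrow> graded_cat V (funL V W B C))"
proof -
  interpret bigraded_category V W C
    using assms by (simp add: bigraded_category_def bigraded_category_axioms_def monoidal_category_def)
  show ?thesis
    using graded_cat_funR graded_cat_funL by blast
qed

end
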